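(* For every single-player extensive-form game $\Gamma$, $\mathrm{VoR}^{\mathrm{SC}}(\Gamma)\ge1$ for each $\mathrm{SC}\in\{\mathrm{wCDTNash},\mathrm{bCDTNash},\mathrm{wEDTNash},\mathrm{bEDTNash}\}$.
   Context: A single-player extensive-form game consists of a finite rooted tree (nodes $\mathcal H$, leaves $\mathcal Z$, actions $A_h$), nonterminal nodes belonging to Player 1 or chance (fixed distributions), utility $u_1:\mathcal Z\to\mathbb R_{\ge0}$, and a partition $\mathcal I_1$ of Player 1's nodes into infosets with common action sets $A_I$. For a node $h$, $\mathrm{obs}(h)$ is the sequence of (player, infoset, action) along the root-to-$h$ path (excluding $h$), and $\mathrm{obs}_1(h)$ its restriction to Player 1's entries. $\mathrm{pr}_1(\Gamma)$ has the same tree and utilities with each $I\in\mathcal I_1$ partitioned by $h\sim h'\iff\mathrm{obs}_1(h)=\mathrm{obs}_1(h')$. A behavioral strategy $\pi$ assigns $\pi(\cdot\mid I)\in\Delta(A_I)$; $\mathbb P(h\mid\pi)$ is the reach probability; $U_1(\pi)=\sum_z\mathbb P(z\mid\pi)u_1(z)$; $\pi^{I\mapsto\sigma}$ plays $\sigma$ at $I$ and $\pi$ elsewhere. EDT equilibrium: $\pi(\cdot\mid I)\in\arg\max_\sigma U_1(\pi^{I\mapsto\sigma})$ for all $I$. CDT equilibrium: $\pi$ is a KKT point of maximizing $U_1$ over $\prod_I\Delta(A_I)$. Let $I^{\mathrm{1st}}$ be nodes $h\in I$ with $I$ not appearing in $\mathrm{obs}(h)$, $\mathbb P(I\mid\pi)=\sum_{h\in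 I^{\mathrm{1st}}}\mathbb P(h\mid\pi)$, $\mathrm{Fr}(I\mid\pi)=\sum_{h\in I}\mathbb P(h\mid\pi)$, $U_1^{\mathrm{CDT}}(\sigma\mid\pi,I)=U_1(\pi)+\sum_{a\in A_I}(\sigma(a)-\pi(a\mid I))\partial U_1(\pi)/\partial\pi(a\mid I)$. $\pi$ is EDT-rational (resp. CDT-rational) if there are fully mixed $\pi^{(k)}\to\pi$ and $\varepsilon^{(k)}>0$, $\varepsilon^{(k)}\to0$, such that for all $k$, all $I$ with $\mathbb P(I\mid\pi^{(k)})>0$ (resp. $\mathrm{Fr}(I\mid\pi^{(k)})>0$), and all $\sigma\in\Delta(A_I)$: $(U_1(\pi^{(k),I\mapsto\sigma})-U_1(\pi^{(k)}))/\mathbb P(I\mid\pi^{(k)})\le\varepsilon^{(k)}$ (resp. $(U_1^{\mathrm{CDT}}(\sigma\mid\pi^{(k)},I)-U_1(\pi^{(k)}))/\mathrm{Fr}(I\mid\pi^{(k)})\le\varepsilon^{(k)}$). An EDT-Nash (resp. CDT-Nash) equilibrium is an EDT (resp. CDT) equilibrium realization-equivalent (same reach probabilities at all nodes) to an EDT-rational (resp. CDT-rational) strategy. $u_1(\mathrm{bX}(\cdot))$ / $u_1(\mathrm{wX}(\cdot))$ is the max / min of $U_1$ over X equilibria; $\mathrm{VoR}^{\mathrm{SC}}(\Gamma)=u_1(\mathrm{SC}(\mathrm{pr}_1(\Gamma)))/u_1(\mathrm{SC}(\Gamma))$. *)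

theory Defs
  imports Complex_Main
begin

text \<open>Nodes are histories (lists of actions)
  of a finite prefix-closed tree; the root is the empty history.\<close>

record 'a efg =
  H :: "'a list set"
  P1 :: "'a list set"
  chance :: "'a list \<Rightarrow> 'a \<Rightarrow> real"
  util :: "'a list \<Rightarrow> real"
  infosets :: "'a list set set"

definition acts :: "'a efg \<Rightarrow> 'a list \<Rightarrow> 'a set" where
  "acts G h = {a. h @ [a] \<in> H G}"

definition leaves :: "'a efg \<Rightarrow> 'a list set" where
  "leaves G = {h \<in> H G. acts G h = {}}"

definition chance_nodes :: "'a efg \<Rightarrow> 'a list set" where
  "chance_nodes G = H G - leaves G - P1 G"

definition simplex :: "'a set \<Rightarrow> ('a \<Rightarrow> real) set" where
  "simplex A = {\<sigma>. (\<forall>a\<in>A. 0 \<le> \<sigma> a) \<and> sum \<sigma> A = 1}"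

text \<open>Action set of an infoset (common to all its nodes).\<close>
definition actsI :: "'a efg \<Rightarrow> 'a list set \<Rightarrow> 'a set" where
  "actsI G I = acts G (SOME h. h \<in> I)"

definition wf_game :: "'a efg \<Rightarrow> bool" where
  "wf_game G \<longleftrightarrow>
     finite (H G) \<and> [] \<in> H G \<and>
     (\<forall>h\<in>H G. \<forall>k. take k h \<in> H G) \<and>
     P1 G \<subseteq> H G - leaves G \<and>
     (\<forall>h\<in>chance_nodes G. chance G h \<in> simplex (acts G h)) \<and>
     (\<forall>z\<in>leaves G. 0 \<le> util G z) \<and>
     (\<forall>I\<in>infosets G. I \<noteq> {}) \<and>
     (\<forall>I\<in>infosets G. \<forall>J\<in>infosets G. I \<noteq> J \<longrightarrow> I \<inter> J = {}) \<and>
     \<Union>(infosets G) = P1 G \<and>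
     (\<forall>I\<in>infosets G. \<forall>h\<in>I. \<forall>h'\<in>I. acts G h = acts G h')"

definition infoset_of :: "'a efg \<Rightarrow> 'a list \<Rightarrow> 'a list set" where
  "infoset_of G g = (THE I. I \<in> infosets G \<and> g \<in> I)"

definition obs1 :: "'a efg \<Rightarrow> 'a list \<Rightarrow> ('a list set \<times> 'a) list" where
  "obs1 G h = map (\<lambda>k. (infoset_of G (take k h), h ! k))
                  (filter (\<lambda>k. take k h \<in> P1 G) [0..<length h])"

definition pr1 :: "'a efg \<Rightarrow> 'a efg" where
  "pr1 G = G\<lparr> infosets := (\<Union>I\<in>infosets G. (\<lambda>h0. {h \<in> I. obs1 G h = obs1 G h0}) ` I) \<rparr>"

type_synonym 'a strategy = "'a list set \<Rightarrow> 'a \<Rightarrow> real"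

definition strategies :: "'a efg \<Rightarrow> 'a strategy set" where
  "strategies G = {\<pi>. \<forall>I\<in>infosets G. \<pi> I \<in> simplex (actsI G I)}"

definition fully_mixed :: "'a efg \<Rightarrow> 'a strategy \<Rightarrow> bool" where
  "fully_mixed G \<pi> \<longleftrightarrow> (\<forall>I\<in>infosets G. \<forall>a\<in>actsI G I. 0 < \<pi> I a)"

definition reach :: "'a efg \<Rightarrow> 'a strategy \<Rightarrow> 'a list \<Rightarrow> real" where
  "reach G \<pi> h = (\<Prod>k<length h. (if take k h \<in> P1 G
                                   then \<pi> (infoset_of G (take k h)) (h ! k)
                                   else chance G (take k h) (h ! k)))"

definition U :: "'a efg \<Rightarrow> 'a strategy \<Rightarrow> real" where
  "U G \<pi> = (\<Sum>z\<in>leaves G. reach G \<pi> z * util G z)"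

definition dU :: "'a efg \<Rightarrow> 'a strategy \<Rightarrow> 'a list set \<Rightarrow> 'a \<Rightarrow> real" where
  "dU G \<pi> I a = (THE D. ((\<lambda>t. U G (\<pi>(I := (\<pi> I)(a := t)))) has_real_derivative D) (at (\<pi> I a)))"

definition first_nodes :: "'a list set \<Rightarrow> 'a list set" where
  "first_nodes I = {h \<in> I. \<forall>k<length h. take k h \<notin> I}"

definition probI :: "'a efg \<Rightarrow> 'a strategy \<Rightarrow> 'a list set \<Rightarrow> real" where
  "probI G \<pi> I = (\<Sum>h\<in>first_nodes I. reach G \<pi> h)"

definition Fr :: "'a efg \<Rightarrow> 'a strategy \<Rightarrow> 'a list set \<Rightarrow> real" where
  "Fr G \<pi> I = (\<Sum>h\<in>I. reach G \<pi> h)"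

definition U_CDT :: "'a efg \<Rightarrow> ('a \<Rightarrow> real) \<Rightarrow> 'a strategy \<Rightarrow> 'a list set \<Rightarrow> real" where
  "U_CDT G \<sigma> \<pi> I = U G \<pi> + (\<Sum>a\<in>actsI G I. (\<sigma> a - \<pi> I a) * dU G \<pi> I a)"

definition EDT_eq :: "'a efg \<Rightarrow> 'a strategy \<Rightarrow> bool" where
  "EDT_eq G \<pi> \<longleftrightarrow> \<pi> \<in> strategies G \<and>
     (\<forall>I\<in>infosets G. \<forall>\<sigma>\<in>simplex (actsI G I). U G (\<pi>(I := \<sigma>)) \<le> U G \<pi>)"

text \<open>KKT point of maximizing U over the product of simplices (Lagrange multipliers
  lam for the equality constraints, mu >= 0 for the nonnegativity constraints).\<close>
definition CDT_eq :: "'a efg \<Rightarrow> 'a strategy \<Rightarrow> bool" where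
  "CDT_eq G \<pi> \<longleftrightarrow> \<pi> \<in> strategies G \<and>
     (\<exists>lam mu. \<forall>I\<in>infosets G. \<forall>a\<in>actsI G I.
         0 \<le> mu I a \<and> mu I a * \<pi> I a = 0 \<and> dU G \<pi> I a + mu I a = lam I)"

definition converges_to :: "'a efg \<Rightarrow> (nat \<Rightarrow> 'a strategy) \<Rightarrow> 'a strategy \<Rightarrow> bool" where
  "converges_to G \<pi>s \<pi> \<longleftrightarrow>
     (\<forall>I\<in>infosets G. \<forall>a\<in>actsI G I. (\<lambda>k. \<pi>s k I a) \<longlonglongrightarrow> \<pi> I a)"

definition EDT_rational :: "'a efg \<Rightarrow> 'a strategy \<Rightarrow> bool" where
  "EDT_rational G \<pi> \<longleftrightarrow> \<pi> \<in> strategies G \<and>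
     (\<exists>\<pi>s \<epsilon>. (\<forall>k. \<pi>s k \<in> strategies G \<and> fully_mixed G (\<pi>s k)) \<and>
        converges_to G \<pi>s \<pi> \<and> (\<forall>k. 0 < \<epsilon> k) \<and> \<epsilon> \<longlonglongrightarrow> 0 \<and>
        (\<forall>k. \<forall>I\<in>infosets G. 0 < probI G (\<pi>s k) I \<longrightarrow>
           (\<forall>\<sigma>\<in>simplex (actsI G I).
              (U G ((\<pi>s k)(I := \<sigma>)) - U G (\<pi>s k)) / probI G (\<pi>s k) I \<le> \<epsilon> k)))"

definition CDT_rational :: "'a efg \<Rightarrow> 'a strategy \<Rightarrow> bool" where
  "CDT_rational G \<pi> \<longleftrightarrow> \<pi> \<in> strategies G \<and>
     (\<exists>\<pi>s \<epsilon>. (\<forall>k. \<pi>s k \<in> strategies G \<and> fully_mixed G (\<pi>s k)) \<and>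
        converges_to G \<pi>s \<pi> \<and> (\<forall>k. 0 < \<epsilon> k) \<and> \<epsilon> \<longlonglongrightarrow> 0 \<and>
        (\<forall>k. \<forall>I\<in>infosets G. 0 < Fr G (\<pi>s k) I \<longrightarrow>
           (\<forall>\<sigma>\<in>simplex (actsI G I).
              (U_CDT G \<sigma> (\<pi>s k) I - U G (\<pi>s k)) / Fr G (\<pi>s k) I \<le> \<epsilon> k)))"

definition realization_equiv :: "'a efg \<Rightarrow> 'a strategy \<Rightarrow> 'a strategy \<Rightarrow> bool" where
  "realization_equiv G \<pi> \<pi>' \<longleftrightarrow> (\<forall>h\<in>H G. reach G \<pi> h = reach G \<pi>' h)"

definition EDT_Nash :: "'a efg \<Rightarrow> 'a strategy set" where
  "EDT_Nash G = {\<pi>. EDT_eq G \<pi> \<and> (\<exists>\<pi>'. EDT_rational G \<pi>' \<and> realization_equiv G \<pi> \<pi>')}"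

definition CDT_Nash :: "'a efg \<Rightarrow> 'a strategy set" where
  "CDT_Nash G = {\<pi>. CDT_eq G \<pi> \<and> (\<exists>\<pi>'. CDT_rational G \<pi>' \<and> realization_equiv G \<pi> \<pi>')}"

definition best_val :: "'a efg \<Rightarrow> 'a strategy set \<Rightarrow> real" where
  "best_val G S = Sup (U G ` S)"

definition worst_val :: "'a efg \<Rightarrow> 'a strategy set \<Rightarrow> real" where
  "worst_val G S = Inf (U G ` S)"

end

theory Submission
  imports Defs
begin

(* With perfect recall an EDT- or CDT-Nash equilibrium is ex-ante optimal. Along its
   trembling sequence p, switch to an arbitrary strategy sigma one infoset at a time, from
   the shallowest to the deepest. Since a path meets an infoset I at most once, the gain of
   the switch at I factors as (probability of Player 1's own moves leading to I) times a
   continuation term depending only on deeper infosets, where p is still played; the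
   rationality bound of p therefore bounds every switch by epsilon |I|, so U sigma is at most
   U p plus a vanishing error. Every strategy of G induces a strategy of pr1 G with the same
   utility, so every equilibrium value of G is at most every equilibrium value of pr1 G.
   Both equilibrium sets are nonempty: maximisers of U over the strategies playing every
   action with probability at least delta converge, along a subsequence and as delta tends
   to 0, to a strategy that is both an EDT- and a CDT-Nash equilibrium. *)

lemma simplex_nonneg: "\<sigma> \<in> simplex A \<Longrightarrow> a \<in> A \<Longrightarrow> 0 \<le> \<sigma> a"
  unfolding simplex_def by auto

lemma simplex_le_1: "\<sigma> \<in> simplex A \<Longrightarrow> finite A \<Longrightarrow> a \<in> A \<Longrightarrow> \<sigma> a \<le> 1"
  unfolding simplex_def using member_le_sum[of a A \<sigma>] by auto

lemma simplex_mix_uniform: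
  assumes \<sigma>: "\<sigma> \<in> simplex A" and A: "finite A" and \<delta>: "0 \<le> \<delta>" "real (card A) * \<delta> \<le> 1"
  defines "\<sigma>' \<equiv> \<lambda>a. (1 - real (card A) * \<delta>) * \<sigma> a + \<delta>"
  shows "\<sigma>' \<in> simplex A" and "a \<in> A \<Longrightarrow> \<delta> \<le> \<sigma>' a"
    and "a \<in> A \<Longrightarrow> \<bar>\<sigma> a - \<sigma>' a\<bar> \<le> real (card A) * \<delta>"
proof -
  show ge: "\<delta> \<le> \<sigma>' a" if "a \<in> A" for a
    unfolding \<sigma>'_def using simplex_nonneg[OF \<sigma> that] \<delta> by simp
  have "sum \<sigma>' A = (1 - real (card A) * \<delta>) * sum \<sigma> A + real (card A) * \<delta>"
    unfolding \<sigma>'_def by (simp add: sum.distrib sum_distrib_left)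
  then show "\<sigma>' \<in> simplex A"
    using \<sigma> ge \<delta>(1) unfolding simplex_def by (auto intro: order_trans)
  assume a: "a \<in> A"
  have "1 \<le> real (card A)" using a A by (auto simp: Suc_le_eq card_gt_0_iff)
  moreover have "0 \<le> \<sigma> a" "\<sigma> a \<le> 1" using simplex_nonneg[OF \<sigma> a] simplex_le_1[OF \<sigma> A a] .
  then have "0 \<le> real (card A) * \<sigma> a" "real (card A) * \<sigma> a \<le> real (card A)"
    by (simp_all add: mult_left_le)
  ultimately have "\<bar>real (card A) * \<sigma> a - 1\<bar> \<le> real (card A)"
    unfolding abs_le_iff by linarith
  moreover have "\<sigma> a - \<sigma>' a = \<delta> * (real (card A) * \<sigma> a - 1)"
    unfolding \<sigma>'_def by (simp add: algebra_simps)
  ultimately show "\<bar>\<sigma> a - \<sigma>' a\<bar> \<le> real (card A) * \<delta>"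
    using \<delta>(1) by (simp add: abs_mult mult.commute mult_left_mono)
qed

text \<open>Complementary slackness for a linear first-order condition on a simplex: moving the
  mass of a supported action to an action with larger \<open>g\<close> would increase the linearisation.\<close>
lemma simplex_variational_support_Max:
  fixes g :: "'b \<Rightarrow> real"
  assumes A: "finite A" and p: "p \<in> simplex A"
    and vi: "\<And>\<sigma>. \<sigma> \<in> simplex A \<Longrightarrow> (\<Sum>a\<in>A. (\<sigma> a - p a) * g a) \<le> 0"
    and a: "a \<in> A" and pa: "0 < p a"
  shows "g a = Max (g ` A)"
proof (rule ccontr)
  have fin: "finite (g ` A)" using A by simp
  assume "g a \<noteq> Max (g ` A)"
  then have less: "g a < Max (g ` A)" using fin a by (simp add: less_le)
  obtain b where b: "b \<in> A" "g b = Max (g ` A)"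
    using Max_in[OF fin] a by fastforce
  define e where "e x = (if x = b then 1 else 0) - (if x = a then 1 else (0::real))" for x
  define \<sigma> where "\<sigma> x = p x + p a * e x" for x
  have ab: "a \<noteq> b" using less b(2) by auto
  have "(\<Sum>x\<in>A. e x) = 0" and eg: "(\<Sum>x\<in>A. e x * g x) = g b - g a"
    unfolding e_def using a b(1) A
    by (simp_all add: sum_subtractf left_diff_distrib if_distrib[of "\<lambda>c. c * _"] cong: if_cong)
  then have "sum \<sigma> A = 1"
    using p unfolding simplex_def \<sigma>_def by (simp add: sum.distrib sum_distrib_left[symmetric])
  moreover have "0 \<le> \<sigma> x" if "x \<in> A" for x
    using simplex_nonneg[OF p that] pa ab unfolding \<sigma>_def e_def by auto
  ultimately have "\<sigma> \<in> simplex A" unfolding simplex_def by blast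
  moreover have "(\<Sum>x\<in>A. (\<sigma> x - p x) * g x) = p a * (g b - g a)"
    unfolding \<sigma>_def using eg by (simp add: sum_distrib_left[symmetric] mult.assoc)
  moreover have "0 < p a * (g b - g a)" using pa less b(2) by simp
  ultimately show False using vi by fastforce
qed

lemma bounded_seqs_convergent_subseq:
  fixes f :: "nat \<Rightarrow> 'k \<Rightarrow> real"
  assumes "finite K" and "\<And>\<kappa> n. \<kappa> \<in> K \<Longrightarrow> \<bar>f n \<kappa>\<bar> \<le> B"
  shows "\<exists>r. strict_mono r \<and> (\<forall>\<kappa>\<in>K. convergent (\<lambda>n. f (r n) \<kappa>))"
  using assms
proof (induction K rule: finite_induct)
  case empty
  have "strict_mono (\<lambda>n::nat. n)" by (simp add: strict_mono_def)
  then show ?case by blast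
next
  case (insert x F)
  then obtain r where r: "strict_mono r" "\<forall>\<kappa>\<in>F. convergent (\<lambda>n. f (r n) \<kappa>)" by blast
  obtain g where g: "strict_mono g" "monoseq (\<lambda>n. f (r (g n)) x)"
    using seq_monosub[of "\<lambda>n. f (r n) x"] by blast
  have "Bseq (\<lambda>n. f (r (g n)) x)" using insert.prems by (intro BseqI'[where K=B]) simp
  then have "convergent (\<lambda>n. f (r (g n)) x)" using g(2) by (rule Bseq_monoseq_convergent)
  moreover have "convergent (\<lambda>n. f (r (g n)) \<kappa>)" if "\<kappa> \<in> F" for \<kappa>
    using convergent_subseq_convergent[OF r(2)[rule_format, OF that] g(1)] by (simp add: comp_def)
  moreover have "strict_mono (r \<circ> g)" using r(1) g(1) by (rule strict_mono_o)
  ultimately show ?case by fastforce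
qed

lemma cInf_cSup_image_le:
  fixes f g :: "'s \<Rightarrow> real"
  assumes "A \<noteq> {}" "B \<noteq> {}" and le: "\<And>a b. a \<in> A \<Longrightarrow> b \<in> B \<Longrightarrow> f a \<le> g b"
    and "bdd_below (f ` A)" "bdd_above (g ` B)"
  shows "Inf (f ` A) \<le> Inf (g ` B) \<and> Sup (f ` A) \<le> Sup (g ` B)"
proof
  obtain a0 b0 where a0: "a0 \<in> A" and b0: "b0 \<in> B" using assms(1,2) by blast
  have "Inf (f ` A) \<le> f a0" using a0 assms(4) by (intro cInf_lower) auto
  also have "f a0 \<le> Inf (g ` B)" using assms(2) le[OF a0] by (intro cInf_greatest) auto
  finally show "Inf (f ` A) \<le> Inf (g ` B)" .
  have "Sup (f ` A) \<le> g b0" using assms(1) le[OF _ b0] by (intro cSup_least) auto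
  also have "g b0 \<le> Sup (g ` B)" using b0 assms(5) by (intro cSup_upper) auto
  finally show "Sup (f ` A) \<le> Sup (g ` B)" .
qed

lemma segment_ge: "\<delta> \<le> p \<Longrightarrow> \<delta> \<le> s \<Longrightarrow> 0 \<le> t \<Longrightarrow> t \<le> 1 \<Longrightarrow> \<delta> \<le> p + t * (s - p)"
  for \<delta> p s t :: real
  using mult_left_mono[of "\<delta> - p" "s - p" t] mult_right_mono[of t 1 "p - \<delta>"] by (simp add: algebra_simps)

lemma filter_upt_nth_prefix:
  "i < length (filter P [0..<n]) \<Longrightarrow> filter P [0..<filter P [0..<n] ! i] = take i (filter P [0..<n])"
proof (induction n)
  case 0
  then show ?case by simp
next
  case (Suc n)
  let ?xs = "filter P [0..<n]"
  show ?case
  proof (cases "i < length ?xs")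
    case True
    then show ?thesis using Suc.IH by (simp add: nth_append)
  next
    case False
    then have "P n" and "i = length ?xs" using Suc.prems by (auto split: if_splits)
    then show ?thesis by (simp add: nth_append)
  qed
qed

lemma length_filter_upt_less:
  assumes "j < k" "P j"
  shows "length (filter P [0..<j]) < length (filter P [0..<k])"
proof -
  have "[0..<k] = [0..<j] @ j # [Suc j..<k]"
    using assms upt_add_eq_append[of 0 j "k - j"] by (simp add: upt_conv_Cons)
  then show ?thesis using assms by simp
qed

section \<open>Reach probabilities and the derivative of the utility\<close>

definition move_prob :: "'a efg \<Rightarrow> 'a strategy \<Rightarrow> 'a list \<Rightarrow> nat \<Rightarrow> real" where
  "move_prob G \<pi> h k = (if take k h \<in> P1 G then \<pi> (infoset_of G (take k h)) (h ! k)
                        else chance G (take k h) (h ! k))"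

lemma reach_eq_prod_move_prob: "reach G \<pi> h = (\<Prod>k<length h. move_prob G \<pi> h k)"
  unfolding reach_def move_prob_def by simp

lemma U_eq_prod_move_prob: "U G \<pi> = (\<Sum>z\<in>leaves G. (\<Prod>k<length z. move_prob G \<pi> z k) * util G z)"
  unfolding U_def reach_eq_prod_move_prob by simp

lemma move_prob_take: "k < j \<Longrightarrow> move_prob G \<pi> (take j z) k = move_prob G \<pi> z k"
  unfolding move_prob_def by (simp add: min_def)

lemma reach_take: "j \<le> length z \<Longrightarrow> reach G \<pi> (take j z) = (\<Prod>k<j. move_prob G \<pi> z k)"
  unfolding reach_eq_prod_move_prob by (simp add: move_prob_take min_absorb2)

definition tail_prob :: "'a efg \<Rightarrow> 'a strategy \<Rightarrow> 'a list \<Rightarrow> nat \<Rightarrow> real" where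
  "tail_prob G \<pi> z j = (\<Prod>k\<in>{Suc j..<length z}. move_prob G \<pi> z k)"

lemma prod_move_prob_remove:
  assumes "j < length z"
  shows "(\<Prod>k\<in>{..<length z}-{j}. move_prob G \<pi> z k) = reach G \<pi> (take j z) * tail_prob G \<pi> z j"
proof -
  have "{..<length z}-{j} = {..<j} \<union> {Suc j..<length z}" using assms by auto
  then have "(\<Prod>k\<in>{..<length z}-{j}. move_prob G \<pi> z k) =
      (\<Prod>k\<in>{..<j} \<union> {Suc j..<length z}. move_prob G \<pi> z k)" by simp
  also have "\<dots> = (\<Prod>k<j. move_prob G \<pi> z k) * tail_prob G \<pi> z j"
    unfolding tail_prob_def by (rule prod.union_disjoint) auto
  finally show ?thesis using reach_take[of j z] assms by simp
qed

definition visits :: "'a list set \<Rightarrow> 'a list \<Rightarrow> nat set" where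
  "visits I z = {j \<in> {..<length z}. take j z \<in> I}"

lemma finite_visits [simp]: "finite (visits I z)"
  unfolding visits_def by simp

lemma sum_visits: "(\<Sum>j<length z. if take j z \<in> I then f j else 0) = (\<Sum>j\<in>visits I z. f j)"
  unfolding visits_def by (rule sum.inter_filter[symmetric]) simp

text \<open>The derivative of \<open>U\<close> in direction \<open>d\<close> of the behaviour at \<open>I\<close>: by the product
  rule, every visit of a leaf path to \<open>I\<close> contributes one term.\<close>
definition dU_dir :: "'a efg \<Rightarrow> 'a strategy \<Rightarrow> 'a list set \<Rightarrow> ('a \<Rightarrow> real) \<Rightarrow> real" where
  "dU_dir G \<pi> I d = (\<Sum>z\<in>leaves G. (\<Sum>j\<in>visits I z.
      d (z ! j) * (\<Prod>k\<in>{..<length z}-{j}. move_prob G \<pi> z k)) * util G z)"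

lemma dU_dir_sum: "dU_dir G \<pi> I (\<lambda>b. \<Sum>a\<in>A. f a b) = (\<Sum>a\<in>A. dU_dir G \<pi> I (f a))"
  unfolding dU_dir_def sum_distrib_right by (simp add: sum.swap[of _ A])

lemma dU_dir_scale: "dU_dir G \<pi> I (\<lambda>b. c * g b) = c * dU_dir G \<pi> I g"
  unfolding dU_dir_def by (simp add: sum_distrib_left[symmetric] mult.assoc)

lemma dU_dir_add: "dU_dir G \<pi> I (\<lambda>a. d a + d' a) = dU_dir G \<pi> I d + dU_dir G \<pi> I d'"
  unfolding dU_dir_def by (simp add: sum.distrib distrib_right)

locale game =
  fixes G :: "'a efg"
  assumes wf: "wf_game G"
begin

lemma finite_H: "finite (H G)"
  using wf unfolding wf_game_def by simp

lemma take_in_H: "h \<in> H G \<Longrightarrow> take k h \<in> H G"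
  using wf unfolding wf_game_def by simp

lemma P1_subset: "P1 G \<subseteq> H G - leaves G"
  using wf unfolding wf_game_def by simp

lemma chance_simplex: "h \<in> chance_nodes G \<Longrightarrow> chance G h \<in> simplex (acts G h)"
  using wf unfolding wf_game_def by simp

lemma util_nonneg: "z \<in> leaves G \<Longrightarrow> 0 \<le> util G z"
  using wf unfolding wf_game_def by simp

lemma infoset_nonempty: "I \<in> infosets G \<Longrightarrow> I \<noteq> {}"
  using wf unfolding wf_game_def by simp

lemma infosets_disjoint: "I \<in> infosets G \<Longrightarrow> J \<in> infosets G \<Longrightarrow> I \<noteq> J \<Longrightarrow> I \<inter> J = {}"
  using wf unfolding wf_game_def by simp

lemma Union_infosets: "\<Union>(infosets G) = P1 G"
  using wf unfolding wf_game_def by simp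

lemma infoset_acts_eq: "I \<in> infosets G \<Longrightarrow> h \<in> I \<Longrightarrow> h' \<in> I \<Longrightarrow> acts G h = acts G h'"
  using wf unfolding wf_game_def by blast

lemma infoset_subset_P1: "I \<in> infosets G \<Longrightarrow> I \<subseteq> P1 G"
  using Union_infosets by blast

lemma infoset_subset_H: "I \<in> infosets G \<Longrightarrow> I \<subseteq> H G"
  using infoset_subset_P1 P1_subset by blast

lemma finite_infosets: "finite (infosets G)"
  by (rule finite_subset[of _ "Pow (H G)"]) (use infoset_subset_H finite_H in auto)

lemma finite_infoset: "I \<in> infosets G \<Longrightarrow> finite I"
  using infoset_subset_H finite_H finite_subset by blast

lemma leaf_in_H: "z \<in> leaves G \<Longrightarrow> z \<in> H G"
  unfolding leaves_def by simp

lemma finite_acts: "finite (acts G h)"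
proof -
  have "inj_on (\<lambda>a. h @ [a]) (acts G h)" by (auto simp: inj_on_def)
  moreover have "(\<lambda>a. h @ [a]) ` acts G h \<subseteq> H G" unfolding acts_def by auto
  ultimately show ?thesis using finite_H finite_imageD finite_subset by blast
qed

lemma finite_actsI: "finite (actsI G I)"
  unfolding actsI_def by (rule finite_acts)

lemma infoset_of_eq: "I \<in> infosets G \<Longrightarrow> g \<in> I \<Longrightarrow> infoset_of G g = I"
  unfolding infoset_of_def using infosets_disjoint by (intro the_equality) blast+

lemma infoset_of_mem:
  assumes "g \<in> P1 G"
  shows "infoset_of G g \<in> infosets G" and "g \<in> infoset_of G g"
proof -
  obtain I where "I \<in> infosets G" "g \<in> I" using assms Union_infosets by blast
  then show "infoset_of G g \<in> infosets G" "g \<in> infoset_of G g" using infoset_of_eq by simp_all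
qed

lemma actsI_eq:
  assumes "I \<in> infosets G" and "h \<in> I"
  shows "actsI G I = acts G h"
proof -
  have "(SOME h. h \<in> I) \<in> I" using \<open>h \<in> I\<close> by (rule someI)
  then show ?thesis unfolding actsI_def using infoset_acts_eq[OF assms(1) _ assms(2)] by blast
qed

lemma action_in_acts: "h \<in> H G \<Longrightarrow> k < length h \<Longrightarrow> h ! k \<in> acts G (take k h)"
  unfolding acts_def using take_in_H[of h "Suc k"] by (simp add: take_Suc_conv_app_nth)

lemma action_in_actsI:
  "I \<in> infosets G \<Longrightarrow> take k h \<in> I \<Longrightarrow> h \<in> H G \<Longrightarrow> k < length h \<Longrightarrow> h ! k \<in> actsI G I"
  using actsI_eq action_in_acts by simp

lemma prefix_not_leaf: "h \<in> H G \<Longrightarrow> k < length h \<Longrightarrow> take k h \<in> H G - leaves G"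
  using action_in_acts[of h k] take_in_H[of h k] unfolding leaves_def by auto

lemma actsI_nonempty:
  assumes I: "I \<in> infosets G"
  shows "actsI G I \<noteq> {}"
proof -
  obtain h where h: "h \<in> I" using infoset_nonempty[OF I] by blast
  then have "h \<in> H G - leaves G" using I infoset_subset_P1 P1_subset by blast
  then show ?thesis using actsI_eq[OF I h] unfolding leaves_def by auto
qed

lemma move_prob_bounds:
  assumes \<pi>: "\<pi> \<in> strategies G" and z: "z \<in> H G" and k: "k < length z"
  shows "0 \<le> move_prob G \<pi> z k \<and> move_prob G \<pi> z k \<le> 1"
proof (cases "take k z \<in> P1 G")
  case True
  let ?I = "infoset_of G (take k z)"
  have a: "z ! k \<in> actsI G ?I"
    using action_in_actsI[OF infoset_of_mem[OF True] z k] .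
  have "\<pi> ?I \<in> simplex (actsI G ?I)" using \<pi> infoset_of_mem[OF True] unfolding strategies_def by auto
  then show ?thesis using True simplex_le_1[OF _ finite_actsI a] simplex_nonneg[OF _ a]
    unfolding move_prob_def by simp
next
  case False
  then have "take k z \<in> chance_nodes G" using prefix_not_leaf[OF z k] unfolding chance_nodes_def by auto
  then have "chance G (take k z) \<in> simplex (acts G (take k z))" by (rule chance_simplex)
  then show ?thesis using False simplex_le_1[OF _ finite_acts action_in_acts[OF z k]]
      simplex_nonneg[OF _ action_in_acts[OF z k]]
    unfolding move_prob_def by simp
qed

lemma move_prob_upd:
  assumes I: "I \<in> infosets G"
  shows "move_prob G (\<pi>(I := x)) z k = (if take k z \<in> I then x (z ! k) else move_prob G \<pi> z k)"
proof (cases "take k z \<in> P1 G")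
  case True
  then show ?thesis using infoset_of_mem[OF True] infoset_of_eq[OF I] unfolding move_prob_def by auto
next
  case False
  then show ?thesis using infoset_subset_P1[OF I] unfolding move_prob_def by auto
qed

lemma U_cong:
  assumes "\<And>J. J \<in> infosets G \<Longrightarrow> \<pi> J = \<pi>' J"
  shows "U G \<pi> = U G \<pi>'"
proof -
  have "move_prob G \<pi> z k = move_prob G \<pi>' z k" for z k
    unfolding move_prob_def using assms infoset_of_mem(1) by simp
  then show ?thesis unfolding U_eq_prod_move_prob by simp
qed

lemma reach_bounds:
  "\<pi> \<in> strategies G \<Longrightarrow> h \<in> H G \<Longrightarrow> 0 \<le> reach G \<pi> h \<and> reach G \<pi> h \<le> 1"
  unfolding reach_eq_prod_move_prob using move_prob_bounds by (auto intro!: prod_nonneg prod_le_1)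

lemma tail_prob_bounds:
  "\<pi> \<in> strategies G \<Longrightarrow> z \<in> H G \<Longrightarrow> 0 \<le> tail_prob G \<pi> z j \<and> tail_prob G \<pi> z j \<le> 1"
  unfolding tail_prob_def using move_prob_bounds by (auto intro!: prod_nonneg prod_le_1)

lemma U_nonneg: "\<pi> \<in> strategies G \<Longrightarrow> 0 \<le> U G \<pi>"
  unfolding U_def using reach_bounds leaf_in_H util_nonneg by (auto intro!: sum_nonneg)

lemma U_le_sum_util: "\<pi> \<in> strategies G \<Longrightarrow> U G \<pi> \<le> (\<Sum>z\<in>leaves G. util G z)"
  unfolding U_def using reach_bounds leaf_in_H util_nonneg
  by (auto intro!: sum_mono mult_left_le_one_le)

lemma U_realization_equiv: "realization_equiv G \<pi> \<pi>' \<Longrightarrow> U G \<pi> = U G \<pi>'"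
  unfolding realization_equiv_def U_def using leaf_in_H by simp

lemma has_derivative_U_line:
  assumes I: "I \<in> infosets G"
  shows "((\<lambda>t. U G (\<pi>(I := \<lambda>b. c b + t * d b))) has_real_derivative
           dU_dir G (\<pi>(I := \<lambda>b. c b + t * d b)) I d) (at t)"
proof -
  let ?\<pi> = "\<lambda>t. \<pi>(I := \<lambda>b. c b + t * d b)"
  let ?P = "\<lambda>t z j. \<Prod>k\<in>{..<length z}-{j}. move_prob G (?\<pi> t) z k"
  have "((\<lambda>t. \<Prod>k<length z. move_prob G (?\<pi> t) z k) has_real_derivative
      (\<Sum>j<length z. (if take j z \<in> I then d (z ! j) else 0) * ?P t z j)) (at t)" for z
    by (rule has_field_derivative_prod)
      (auto simp: move_prob_upd[OF I] intro!: derivative_eq_intros)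
  moreover have "(\<Sum>j<length z. (if take j z \<in> I then d (z ! j) else 0) * ?P t z j) =
      (\<Sum>j\<in>visits I z. d (z ! j) * ?P t z j)" for z
    unfolding sum_visits[symmetric] by (intro sum.cong) auto
  ultimately show ?thesis
    unfolding U_eq_prod_move_prob dU_dir_def by (intro DERIV_sum DERIV_cmult_right) simp
qed

lemma dU_eq_dU_dir:
  assumes I: "I \<in> infosets G"
  shows "dU G \<pi> I a = dU_dir G \<pi> I (\<lambda>b. if b = a then 1 else 0)"
proof -
  have line: "\<pi>(I := \<lambda>b. ((\<pi> I)(a := 0)) b + t * (if b = a then 1 else 0)) = \<pi>(I := (\<pi> I)(a := t))" for t
    by (auto simp: fun_eq_iff)
  have "((\<lambda>t. U G (\<pi>(I := (\<pi> I)(a := t)))) has_real_derivative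
          dU_dir G \<pi> I (\<lambda>b. if b = a then 1 else 0)) (at (\<pi> I a))"
    using has_derivative_U_line[OF I, of \<pi> "(\<pi> I)(a := 0)" "\<lambda>b. if b = a then 1 else 0" "\<pi> I a"]
    unfolding line by simp
  then show ?thesis unfolding dU_def using DERIV_unique by blast
qed

lemma dU_dir_cong:
  assumes I: "I \<in> infosets G" and "\<And>a. a \<in> actsI G I \<Longrightarrow> d a = d' a"
  shows "dU_dir G \<pi> I d = dU_dir G \<pi> I d'"
  unfolding dU_dir_def visits_def using assms action_in_actsI[OF I] leaf_in_H by (auto intro!: sum.cong)

lemma dU_dir_eq_sum_dU:
  assumes I: "I \<in> infosets G"
  shows "dU_dir G \<pi> I d = (\<Sum>a\<in>actsI G I. d a * dU G \<pi> I a)"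
proof -
  have "dU_dir G \<pi> I d = dU_dir G \<pi> I (\<lambda>b. \<Sum>a\<in>actsI G I. d a * (if b = a then 1 else 0))"
    by (rule dU_dir_cong[OF I]) (simp add: finite_actsI if_distrib[of "\<lambda>x. _ * x"] cong: if_cong)
  then show ?thesis by (simp add: dU_dir_sum dU_dir_scale dU_eq_dU_dir[OF I])
qed

lemma U_CDT_eq: "I \<in> infosets G \<Longrightarrow> U_CDT G \<sigma> \<pi> I = U G \<pi> + dU_dir G \<pi> I (\<lambda>a. \<sigma> a - \<pi> I a)"
  unfolding U_CDT_def by (simp add: dU_dir_eq_sum_dU)

lemma move_prob_tendsto:
  assumes c: "converges_to G \<pi>s \<pi>" and z: "z \<in> H G" and k: "k < length z"
  shows "(\<lambda>n. move_prob G (\<pi>s n) z k) \<longlonglongrightarrow> move_prob G \<pi> z k"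
proof (cases "take k z \<in> P1 G")
  case True
  then show ?thesis
    using c infoset_of_mem[OF True] action_in_actsI[OF infoset_of_mem[OF True] z k]
    unfolding move_prob_def converges_to_def by simp
qed (simp add: move_prob_def)

lemma U_tendsto: "converges_to G \<pi>s \<pi> \<Longrightarrow> (\<lambda>n. U G (\<pi>s n)) \<longlonglongrightarrow> U G \<pi>"
  unfolding U_eq_prod_move_prob
  by (intro tendsto_sum tendsto_mult tendsto_prod tendsto_const move_prob_tendsto) (auto simp: leaf_in_H)

lemma dU_dir_tendsto: "converges_to G \<pi>s \<pi> \<Longrightarrow> (\<lambda>n. dU_dir G (\<pi>s n) I d) \<longlonglongrightarrow> dU_dir G \<pi> I d"
  unfolding dU_dir_def visits_def
  by (intro tendsto_sum tendsto_mult tendsto_prod tendsto_const move_prob_tendsto) (auto simp: leaf_in_H)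

end

section \<open>Perturbed maximisers\<close>

definition perturbed_strategies :: "'a efg \<Rightarrow> real \<Rightarrow> 'a strategy set" where
  "perturbed_strategies G \<delta> = {\<pi> \<in> strategies G. \<forall>I\<in>infosets G. \<forall>a\<in>actsI G I. \<delta> \<le> \<pi> I a}"

definition num_actions :: "'a efg \<Rightarrow> real" where
  "num_actions G = (\<Sum>I\<in>infosets G. real (card (actsI G I)))"

definition perturbation_const :: "'a efg \<Rightarrow> real" where
  "perturbation_const G = num_actions G * (\<Sum>z\<in>leaves G. (real (length z) + 1) * util G z)"

context game
begin

lemma converges_subseq:
  fixes \<pi>s :: "nat \<Rightarrow> 'a strategy"
  assumes "\<And>n. \<pi>s n \<in> strategies G"
  obtains r \<pi> where "strict_mono r" and "converges_to G (\<lambda>n. \<pi>s (r n)) \<pi>"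
proof -
  let ?K = "Sigma (infosets G) (actsI G)"
  have "\<bar>\<pi>s n (fst \<kappa>) (snd \<kappa>)\<bar> \<le> 1" if "\<kappa> \<in> ?K" for \<kappa> n
  proof -
    have \<sigma>: "\<pi>s n (fst \<kappa>) \<in> simplex (actsI G (fst \<kappa>))"
      using assms that unfolding strategies_def by auto
    have a: "snd \<kappa> \<in> actsI G (fst \<kappa>)" using that by auto
    show ?thesis using simplex_le_1[OF \<sigma> finite_actsI a] simplex_nonneg[OF \<sigma> a] by simp
  qed
  moreover have "finite ?K" using finite_infosets finite_actsI by simp
  ultimately obtain r where r: "strict_mono r"
      and conv: "\<forall>\<kappa>\<in>?K. convergent (\<lambda>n. \<pi>s (r n) (fst \<kappa>) (snd \<kappa>))"
    using bounded_seqs_convergent_subseq[of ?K "\<lambda>n \<kappa>. \<pi>s n (fst \<kappa>) (snd \<kappa>)" 1] by blast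
  have "converges_to G (\<lambda>n. \<pi>s (r n)) (\<lambda>I a. lim (\<lambda>n. \<pi>s (r n) I a))"
    using conv unfolding converges_to_def by (auto simp: convergent_LIMSEQ_iff)
  with r show ?thesis by (rule that)
qed

lemma perturbed_strategies_closed:
  assumes "\<And>n. \<pi>s n \<in> perturbed_strategies G \<delta>" and c: "converges_to G \<pi>s \<pi>" and \<delta>: "0 \<le> \<delta>"
  shows "\<pi> \<in> perturbed_strategies G \<delta>"
  unfolding perturbed_strategies_def strategies_def
proof (intro CollectI conjI ballI)
  fix I assume I: "I \<in> infosets G"
  have lim: "a \<in> actsI G I \<Longrightarrow> (\<lambda>n. \<pi>s n I a) \<longlonglongrightarrow> \<pi> I a" for a
    using c I unfolding converges_to_def by blast
  have \<pi>s: "\<pi>s n I \<in> simplex (actsI G I)" "a \<in> actsI G I \<Longrightarrow> \<delta> \<le> \<pi>s n I a" for n a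
    using assms(1)[of n] I unfolding perturbed_strategies_def strategies_def by blast+
  show ge: "\<delta> \<le> \<pi> I a" if a: "a \<in> actsI G I" for a
    using LIMSEQ_le_const[OF lim[OF a]] \<pi>s(2)[OF a] by blast
  have "(\<lambda>n. \<Sum>a\<in>actsI G I. \<pi>s n I a) \<longlonglongrightarrow> (\<Sum>a\<in>actsI G I. \<pi> I a)"
    by (intro tendsto_sum lim)
  moreover have "(\<Sum>a\<in>actsI G I. \<pi>s n I a) = 1" for n
    using \<pi>s(1) unfolding simplex_def by blast
  ultimately have "(\<Sum>a\<in>actsI G I. \<pi> I a) = 1"
    using LIMSEQ_unique[OF _ tendsto_const] by simp
  then show "\<pi> I \<in> simplex (actsI G I)"
    unfolding simplex_def using ge \<delta> order_trans by blast
qed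

lemma card_actsI_le_num_actions: "I \<in> infosets G \<Longrightarrow> real (card (actsI G I)) \<le> num_actions G"
  unfolding num_actions_def by (rule member_le_sum) (auto simp: finite_infosets)

lemma num_actions_nonneg: "0 \<le> num_actions G"
  unfolding num_actions_def by (simp add: sum_nonneg)

lemma uniform_strategy_perturbed:
  assumes "0 \<le> \<delta>" "num_actions G * \<delta> \<le> 1"
  shows "(\<lambda>I a. 1 / real (card (actsI G I))) \<in> perturbed_strategies G \<delta>"
  unfolding perturbed_strategies_def strategies_def
proof (intro CollectI conjI ballI)
  fix I assume I: "I \<in> infosets G"
  have c: "0 < card (actsI G I)" using actsI_nonempty[OF I] finite_actsI card_gt_0_iff by blast
  show "(\<lambda>a. 1 / real (card (actsI G I))) \<in> simplex (actsI G I)"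
    unfolding simplex_def using c by simp
  have "real (card (actsI G I)) * \<delta> \<le> 1"
    using mult_right_mono[OF card_actsI_le_num_actions[OF I] assms(1)] assms(2) by linarith
  then show "\<delta> \<le> 1 / real (card (actsI G I))" if "a \<in> actsI G I" for a
    using c by (simp add: field_simps)
qed

lemma perturbed_maximizer_exists:
  assumes \<delta>: "0 \<le> \<delta>" "num_actions G * \<delta> \<le> 1"
  obtains \<pi> where "\<pi> \<in> perturbed_strategies G \<delta>"
    and "\<And>\<sigma>. \<sigma> \<in> perturbed_strategies G \<delta> \<Longrightarrow> U G \<sigma> \<le> U G \<pi>"
proof -
  let ?S = "U G ` perturbed_strategies G \<delta>"
  have bdd: "bdd_above ?S"
    using U_le_sum_util unfolding perturbed_strategies_def by (intro bdd_aboveI) blast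
  have ne: "?S \<noteq> {}" using uniform_strategy_perturbed[OF \<delta>] by blast
  have "\<exists>\<pi>\<in>perturbed_strategies G \<delta>. Sup ?S - inverse (real (Suc n)) < U G \<pi>" for n
    using less_cSup_iff[OF ne bdd, of "Sup ?S - inverse (real (Suc n))"] by auto
  then obtain x where x: "\<And>n. x n \<in> perturbed_strategies G \<delta>"
      and close: "\<And>n. Sup ?S - inverse (real (Suc n)) < U G (x n)"
    by metis
  obtain r \<pi> where r: "strict_mono r" and c: "converges_to G (\<lambda>n. x (r n)) \<pi>"
    using converges_subseq[of x] x unfolding perturbed_strategies_def by blast
  have "Sup ?S - inverse (real (Suc n)) \<le> U G (x (r n))" for n
  proof -
    have "inverse (real (Suc (r n))) \<le> inverse (real (Suc n))"
      using seq_suble[OF r, of n] by (intro le_imp_inverse_le) auto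
    then show ?thesis using close[of "r n"] by linarith
  qed
  moreover have "(\<lambda>n. Sup ?S - inverse (real (Suc n))) \<longlonglongrightarrow> Sup ?S - 0"
    by (intro tendsto_intros LIMSEQ_inverse_real_of_nat)
  ultimately have "Sup ?S \<le> U G \<pi>"
    using LIMSEQ_le[OF _ U_tendsto[OF c]] by auto
  moreover have "\<pi> \<in> perturbed_strategies G \<delta>"
    using perturbed_strategies_closed[OF _ c \<delta>(1)] x by blast
  moreover have "U G \<sigma> \<le> Sup ?S" if "\<sigma> \<in> perturbed_strategies G \<delta>" for \<sigma>
    using bdd that by (intro cSup_upper) auto
  ultimately show ?thesis using that order_trans by blast
qed

lemma probI_nonneg: "I \<in> infosets G \<Longrightarrow> \<pi> \<in> strategies G \<Longrightarrow> 0 \<le> probI G \<pi> I"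
  unfolding probI_def first_nodes_def using reach_bounds infoset_subset_H
  by (intro sum_nonneg) blast

lemma Fr_nonneg: "I \<in> infosets G \<Longrightarrow> \<pi> \<in> strategies G \<Longrightarrow> 0 \<le> Fr G \<pi> I"
  unfolding Fr_def using reach_bounds infoset_subset_H by (intro sum_nonneg) blast

lemma probI_le_card:
  assumes I: "I \<in> infosets G" and \<pi>: "\<pi> \<in> strategies G"
  shows "probI G \<pi> I \<le> card I"
proof -
  have "probI G \<pi> I \<le> (\<Sum>h\<in>first_nodes I. 1)"
    unfolding probI_def using reach_bounds[OF \<pi>] infoset_subset_H[OF I]
    unfolding first_nodes_def by (intro sum_mono) blast
  also have "\<dots> \<le> card I"
  proof -
    have "card (first_nodes I) \<le> card I"
      using finite_infoset[OF I] unfolding first_nodes_def by (intro card_mono) auto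
    then show ?thesis by simp
  qed
  finally show ?thesis .
qed

lemma Fr_le_card:
  assumes "I \<in> infosets G" and "\<pi> \<in> strategies G"
  shows "Fr G \<pi> I \<le> card I"
proof -
  have "Fr G \<pi> I \<le> (\<Sum>h\<in>I. 1)"
    unfolding Fr_def using reach_bounds[OF assms(2)] infoset_subset_H[OF assms(1)] by (intro sum_mono) blast
  then show ?thesis by simp
qed

lemma reach_le_probI:
  assumes I: "I \<in> infosets G" and \<pi>: "\<pi> \<in> strategies G" and h: "h \<in> first_nodes I"
  shows "reach G \<pi> h \<le> probI G \<pi> I"
proof -
  have "finite (first_nodes I)" using finite_infoset[OF I] unfolding first_nodes_def by simp
  moreover have "0 \<le> reach G \<pi> g" if "g \<in> first_nodes I" for g
    using that reach_bounds[OF \<pi>] infoset_subset_H[OF I] unfolding first_nodes_def by blast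
  ultimately show ?thesis unfolding probI_def using member_le_sum[OF h] by blast
qed

lemma first_visit:
  assumes "visits I z \<noteq> {}"
  obtains j where "j \<in> visits I z" and "take j z \<in> first_nodes I" and "\<And>k. k < j \<Longrightarrow> take k z \<notin> I"
proof
  let ?j = "Min (visits I z)"
  show j: "?j \<in> visits I z" using assms by simp
  show before: "take k z \<notin> I" if "k < ?j" for k
  proof
    assume "take k z \<in> I"
    then have "k \<in> visits I z" using that j unfolding visits_def by auto
    then show False using Min_le[OF finite_visits] that by (simp add: not_le[symmetric])
  qed
  show "take ?j z \<in> first_nodes I"
    unfolding first_nodes_def
  proof (intro CollectI conjI allI impI)
    show "take ?j z \<in> I" using j unfolding visits_def by simp
    fix k assume "k < length (take ?j z)"
    then show "take k (take ?j z) \<notin> I" using before by simp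
  qed
qed

lemma strategies_upd:
  "\<pi> \<in> strategies G \<Longrightarrow> x \<in> simplex (actsI G I) \<Longrightarrow> \<pi>(I := x) \<in> strategies G"
  unfolding strategies_def by simp

lemma perturbed_strategies_upd:
  "\<pi> \<in> perturbed_strategies G \<delta> \<Longrightarrow> x \<in> simplex (actsI G I) \<Longrightarrow> (\<And>a. a \<in> actsI G I \<Longrightarrow> \<delta> \<le> x a)
    \<Longrightarrow> \<pi>(I := x) \<in> perturbed_strategies G \<delta>"
  unfolding perturbed_strategies_def strategies_def by simp

text \<open>Two behaviours at \<open>I\<close> can only be told apart from the first visit to \<open>I\<close> on;
  this is what brings in the factor \<open>probI\<close>.\<close>
lemma prod_move_prob_upd_diff_le:
  assumes I: "I \<in> infosets G" and \<pi>: "\<pi> \<in> strategies G"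
    and x: "x \<in> simplex (actsI G I)" and y: "y \<in> simplex (actsI G I)"
    and c: "\<And>a. a \<in> actsI G I \<Longrightarrow> \<bar>x a - y a\<bar> \<le> c" and z: "z \<in> H G"
  shows "\<bar>(\<Prod>k<length z. move_prob G (\<pi>(I := x)) z k) - (\<Prod>k<length z. move_prob G (\<pi>(I := y)) z k)\<bar>
         \<le> probI G \<pi> I * (real (length z) * c)"
proof -
  have c0: "0 \<le> c" using c actsI_nonempty[OF I] by (meson abs_ge_zero ex_in_conv order_trans)
  show ?thesis
  proof (cases "visits I z = {}")
    case True
    then have "move_prob G (\<pi>(I := w)) z k = move_prob G \<pi> z k" if "k < length z" for w k
      using that unfolding move_prob_upd[OF I] visits_def by auto
    then show ?thesis using c0 probI_nonneg[OF I \<pi>] by simp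
  next
    case False
    then obtain j where j: "j \<in> visits I z" "take j z \<in> first_nodes I"
      and before: "\<And>k. k < j \<Longrightarrow> take k z \<notin> I" by (rule first_visit) blast
    let ?T = "\<lambda>w. \<Prod>k\<in>{j..<length z}. move_prob G (\<pi>(I := w)) z k"
    have split: "(\<Prod>k<length z. move_prob G (\<pi>(I := w)) z k) = reach G \<pi> (take j z) * ?T w" for w
    proof -
      have "{..<length z} = {..<j} \<union> {j..<length z}" using j(1) unfolding visits_def by auto
      then have "(\<Prod>k<length z. move_prob G (\<pi>(I := w)) z k) =
          (\<Prod>k<j. move_prob G (\<pi>(I := w)) z k) * ?T w"
        by (simp add: prod.union_disjoint ivl_disj_int_one(2))
      moreover have "(\<Prod>k<j. move_prob G (\<pi>(I := w)) z k) = reach G \<pi> (take j z)"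
        using reach_take[of j z] j(1) before by (simp add: move_prob_upd[OF I] visits_def)
      ultimately show ?thesis by simp
    qed
    have "\<bar>?T x - ?T y\<bar> \<le> (\<Sum>k\<in>{j..<length z}. \<bar>move_prob G (\<pi>(I := x)) z k - move_prob G (\<pi>(I := y)) z k\<bar>)"
      using norm_prod_diff[of "{j..<length z}" "move_prob G (\<pi>(I := x)) z" "move_prob G (\<pi>(I := y)) z"]
        move_prob_bounds[OF strategies_upd[OF \<pi> x] z] move_prob_bounds[OF strategies_upd[OF \<pi> y] z]
      by simp
    also have "\<dots> \<le> (\<Sum>k\<in>{j..<length z}. c)"
      using c c0 action_in_actsI[OF I _ z] by (intro sum_mono) (simp add: move_prob_upd[OF I])
    also have "\<dots> \<le> real (length z) * c" using c0 by (simp add: mult_right_mono)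
    finally have "\<bar>?T x - ?T y\<bar> \<le> real (length z) * c" .
    moreover have "0 \<le> reach G \<pi> (take j z)" "reach G \<pi> (take j z) \<le> probI G \<pi> I"
      using reach_bounds[OF \<pi> take_in_H[OF z]] reach_le_probI[OF I \<pi> j(2)] by auto
    ultimately show ?thesis
      unfolding split right_diff_distrib[symmetric] abs_mult using c0 by (intro mult_mono) auto
  qed
qed

lemma perturbation_const_nonneg: "0 \<le> perturbation_const G"
  unfolding perturbation_const_def using num_actions_nonneg util_nonneg
  by (intro mult_nonneg_nonneg sum_nonneg) auto

lemma perturbed_approximation:
  assumes \<delta>: "0 \<le> \<delta>" "num_actions G * \<delta> \<le> 1" and I: "I \<in> infosets G" and \<sigma>: "\<sigma> \<in> simplex (actsI G I)"
  obtains \<sigma>' where "\<sigma>' \<in> simplex (actsI G I)" and "\<And>a. a \<in> actsI G I \<Longrightarrow> \<delta> \<le> \<sigma>' a"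
    and "\<And>a. a \<in> actsI G I \<Longrightarrow> \<bar>\<sigma> a - \<sigma>' a\<bar> \<le> num_actions G * \<delta>"
proof -
  let ?m = "real (card (actsI G I))"
  have m: "?m * \<delta> \<le> num_actions G * \<delta>"
    using mult_right_mono[OF card_actsI_le_num_actions[OF I] \<delta>(1)] .
  show ?thesis
    using that simplex_mix_uniform[OF \<sigma> finite_actsI \<delta>(1) order_trans[OF m \<delta>(2)]] m by fastforce
qed

lemma perturbed_maximizer_deviation_le:
  assumes \<pi>: "\<pi> \<in> perturbed_strategies G \<delta>"
    and max: "\<And>\<sigma>. \<sigma> \<in> perturbed_strategies G \<delta> \<Longrightarrow> U G \<sigma> \<le> U G \<pi>"
    and \<delta>: "0 \<le> \<delta>" "num_actions G * \<delta> \<le> 1" and I: "I \<in> infosets G" and \<sigma>: "\<sigma> \<in> simplex (actsI G I)"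
  shows "U G (\<pi>(I := \<sigma>)) - U G \<pi> \<le> probI G \<pi> I * (\<delta> * perturbation_const G)"
proof -
  obtain \<sigma>' where \<sigma>': "\<sigma>' \<in> simplex (actsI G I)" "\<And>a. a \<in> actsI G I \<Longrightarrow> \<delta> \<le> \<sigma>' a"
      "\<And>a. a \<in> actsI G I \<Longrightarrow> \<bar>\<sigma> a - \<sigma>' a\<bar> \<le> num_actions G * \<delta>"
    using perturbed_approximation[OF \<delta> I \<sigma>] by blast
  have \<pi>s: "\<pi> \<in> strategies G" using \<pi> unfolding perturbed_strategies_def by blast
  have "U G (\<pi>(I := \<sigma>)) - U G \<pi> \<le> U G (\<pi>(I := \<sigma>)) - U G (\<pi>(I := \<sigma>'))"
    using max perturbed_strategies_upd[OF \<pi> \<sigma>'(1,2)] by force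
  also have "\<dots> \<le> (\<Sum>z\<in>leaves G. probI G \<pi> I * (real (length z) * (num_actions G * \<delta>)) * util G z)"
    unfolding U_eq_prod_move_prob sum_subtractf[symmetric] left_diff_distrib[symmetric]
    using prod_move_prob_upd_diff_le[OF I \<pi>s \<sigma> \<sigma>'(1,3)] leaf_in_H util_nonneg
    by (intro sum_mono mult_right_mono) (auto simp: abs_le_iff)
  also have "\<dots> \<le> (\<Sum>z\<in>leaves G. probI G \<pi> I * ((real (length z) + 1) * (num_actions G * \<delta>)) * util G z)"
    using probI_nonneg[OF I \<pi>s] num_actions_nonneg \<delta>(1) util_nonneg
    by (intro sum_mono mult_right_mono mult_left_mono) auto
  also have "\<dots> = probI G \<pi> I * (\<delta> * perturbation_const G)"
    unfolding perturbation_const_def by (simp add: sum_distrib_left ac_simps)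
  finally show ?thesis .
qed

lemma dU_dir_nonneg:
  assumes I: "I \<in> infosets G" and \<pi>: "\<pi> \<in> strategies G" and d: "\<And>a. a \<in> actsI G I \<Longrightarrow> 0 \<le> d a"
  shows "0 \<le> dU_dir G \<pi> I d"
  unfolding dU_dir_def visits_def
  using d action_in_actsI[OF I] move_prob_bounds[OF \<pi>] leaf_in_H util_nonneg
  by (auto intro!: sum_nonneg mult_nonneg_nonneg prod_nonneg)

lemma dU_dir_mono:
  assumes I: "I \<in> infosets G" and \<pi>: "\<pi> \<in> strategies G" and le: "\<And>a. a \<in> actsI G I \<Longrightarrow> d a \<le> d' a"
  shows "dU_dir G \<pi> I d \<le> dU_dir G \<pi> I d'"
  using dU_dir_add[of G \<pi> I d "\<lambda>a. d' a - d a"] dU_dir_nonneg[OF I \<pi>, of "\<lambda>a. d' a - d a"] le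
  by simp

lemma dU_dir_one_le_Fr:
  assumes I: "I \<in> infosets G" and \<pi>: "\<pi> \<in> strategies G"
  shows "dU_dir G \<pi> I (\<lambda>_. 1) \<le> Fr G \<pi> I * (\<Sum>z\<in>leaves G. util G z)"
proof -
  have "(\<Sum>j\<in>visits I z. \<Prod>k\<in>{..<length z}-{j}. move_prob G \<pi> z k) \<le> Fr G \<pi> I" if z: "z \<in> H G" for z
  proof -
    have "(\<Sum>j\<in>visits I z. \<Prod>k\<in>{..<length z}-{j}. move_prob G \<pi> z k) \<le>
        (\<Sum>j\<in>visits I z. reach G \<pi> (take j z))"
      using reach_bounds[OF \<pi> take_in_H[OF z]] tail_prob_bounds[OF \<pi> z]
      by (intro sum_mono) (simp add: prod_move_prob_remove visits_def mult_left_le)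
    also have "\<dots> = (\<Sum>h\<in>(\<lambda>j. take j z) ` visits I z. reach G \<pi> h)"
      by (subst sum.reindex) (auto simp: inj_on_def visits_def dest: arg_cong[of _ _ length])
    also have "\<dots> \<le> Fr G \<pi> I"
      unfolding Fr_def using reach_bounds[OF \<pi>] infoset_subset_H[OF I]
      by (intro sum_mono2[OF finite_infoset[OF I]]) (auto simp: visits_def)
    finally show ?thesis .
  qed
  then show ?thesis
    unfolding dU_dir_def sum_distrib_left using leaf_in_H util_nonneg
    by (auto intro!: sum_mono mult_right_mono)
qed

lemma perturbed_maximizer_dU_dir_nonpos:
  assumes \<pi>: "\<pi> \<in> perturbed_strategies G \<delta>"
    and max: "\<And>\<sigma>. \<sigma> \<in> perturbed_strategies G \<delta> \<Longrightarrow> U G \<sigma> \<le> U G \<pi>"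
    and I: "I \<in> infosets G" and \<sigma>: "\<sigma> \<in> simplex (actsI G I)" and \<sigma>\<delta>: "\<And>a. a \<in> actsI G I \<Longrightarrow> \<delta> \<le> \<sigma> a"
  shows "dU_dir G \<pi> I (\<lambda>a. \<sigma> a - \<pi> I a) \<le> 0"
proof (rule ccontr)
  define g where "g t = U G (\<pi>(I := \<lambda>a. \<pi> I a + t * (\<sigma> a - \<pi> I a)))" for t
  assume "\<not> dU_dir G \<pi> I (\<lambda>a. \<sigma> a - \<pi> I a) \<le> 0"
  then have pos: "0 < dU_dir G \<pi> I (\<lambda>a. \<sigma> a - \<pi> I a)" by simp
  have "(g has_real_derivative dU_dir G \<pi> I (\<lambda>a. \<sigma> a - \<pi> I a)) (at 0)"
    using has_derivative_U_line[OF I, of \<pi> "\<pi> I" "\<lambda>a. \<sigma> a - \<pi> I a" 0] unfolding g_def by simp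
  then obtain e where e: "0 < e" "\<And>h. 0 < h \<Longrightarrow> h < e \<Longrightarrow> g 0 < g (0 + h)"
    using DERIV_pos_inc_right pos by blast
  let ?t = "min (e / 2) 1"
  have t: "0 < ?t" "?t \<le> 1" "?t < e" using e(1) by (auto simp: min_def)
  have \<pi>I: "\<pi> I \<in> simplex (actsI G I)" "\<And>a. a \<in> actsI G I \<Longrightarrow> \<delta> \<le> \<pi> I a"
    using \<pi> I unfolding perturbed_strategies_def strategies_def by blast+
  have "(\<lambda>a. \<pi> I a + ?t * (\<sigma> a - \<pi> I a)) \<in> simplex (actsI G I)"
    unfolding simplex_def
  proof (intro CollectI conjI ballI)
    fix a assume a: "a \<in> actsI G I"
    show "0 \<le> \<pi> I a + ?t * (\<sigma> a - \<pi> I a)"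
      using segment_ge[OF simplex_nonneg[OF \<pi>I(1) a] simplex_nonneg[OF \<sigma> a]] t by simp
  next
    have "(\<Sum>a\<in>actsI G I. \<pi> I a + ?t * (\<sigma> a - \<pi> I a)) =
        sum (\<pi> I) (actsI G I) + ?t * (sum \<sigma> (actsI G I) - sum (\<pi> I) (actsI G I))"
      by (simp add: sum.distrib sum_subtractf sum_distrib_left right_diff_distrib)
    then show "(\<Sum>a\<in>actsI G I. \<pi> I a + ?t * (\<sigma> a - \<pi> I a)) = 1"
      using \<pi>I(1) \<sigma> unfolding simplex_def by simp
  qed
  then have "g ?t \<le> g 0"
    unfolding g_def using max perturbed_strategies_upd[OF \<pi>] \<pi>I(2) \<sigma>\<delta> segment_ge t by simp
  then show False using e(2)[of ?t] t by simp
qed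

lemma perturbed_maximizer_dU_dir_le:
  assumes \<pi>: "\<pi> \<in> perturbed_strategies G \<delta>"
    and max: "\<And>\<sigma>. \<sigma> \<in> perturbed_strategies G \<delta> \<Longrightarrow> U G \<sigma> \<le> U G \<pi>"
    and \<delta>: "0 \<le> \<delta>" "num_actions G * \<delta> \<le> 1" and I: "I \<in> infosets G" and \<sigma>: "\<sigma> \<in> simplex (actsI G I)"
  shows "dU_dir G \<pi> I (\<lambda>a. \<sigma> a - \<pi> I a) \<le> Fr G \<pi> I * (\<delta> * perturbation_const G)"
proof -
  obtain \<sigma>' where \<sigma>': "\<sigma>' \<in> simplex (actsI G I)" "\<And>a. a \<in> actsI G I \<Longrightarrow> \<delta> \<le> \<sigma>' a"
      "\<And>a. a \<in> actsI G I \<Longrightarrow> \<bar>\<sigma> a - \<sigma>' a\<bar> \<le> num_actions G * \<delta>"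
    using perturbed_approximation[OF \<delta> I \<sigma>] by blast
  have \<pi>s: "\<pi> \<in> strategies G" using \<pi> unfolding perturbed_strategies_def by blast
  have "dU_dir G \<pi> I (\<lambda>a. \<sigma> a - \<pi> I a) =
      dU_dir G \<pi> I (\<lambda>a. \<sigma> a - \<sigma>' a) + dU_dir G \<pi> I (\<lambda>a. \<sigma>' a - \<pi> I a)"
    using dU_dir_add[of G \<pi> I "\<lambda>a. \<sigma> a - \<sigma>' a" "\<lambda>a. \<sigma>' a - \<pi> I a"] by simp
  also have "\<dots> \<le> dU_dir G \<pi> I (\<lambda>_. num_actions G * \<delta> * 1) + 0"
    using dU_dir_mono[OF I \<pi>s] \<sigma>'(3) perturbed_maximizer_dU_dir_nonpos[OF \<pi> max I \<sigma>'(1,2)]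
    by (intro add_mono) (auto simp: abs_le_iff)
  also have "\<dots> \<le> num_actions G * \<delta> * (Fr G \<pi> I * (\<Sum>z\<in>leaves G. util G z))"
    unfolding dU_dir_scale using num_actions_nonneg \<delta>(1) dU_dir_one_le_Fr[OF I \<pi>s]
    by (simp add: mult_left_mono)
  also have "\<dots> \<le> Fr G \<pi> I * (\<delta> * perturbation_const G)"
  proof -
    have "(\<Sum>z\<in>leaves G. util G z) \<le> (\<Sum>z\<in>leaves G. (real (length z) + 1) * util G z)"
      using util_nonneg by (intro sum_mono) (simp add: distrib_right)
    then show ?thesis
      unfolding perturbation_const_def using Fr_nonneg[OF I \<pi>s] num_actions_nonneg \<delta>(1)
      by (simp add: mult_left_mono ac_simps)
  qed
  finally show ?thesis .
qed

lemma perturbed_strategies_zero: "perturbed_strategies G 0 = strategies G"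
proof -
  have "0 \<le> \<pi> I a" if "\<pi> \<in> strategies G" "I \<in> infosets G" "a \<in> actsI G I" for \<pi> I a
    using simplex_nonneg[of "\<pi> I" "actsI G I" a] that unfolding strategies_def by blast
  then show ?thesis unfolding perturbed_strategies_def by blast
qed

lemma converges_to_upd: "converges_to G \<pi>s \<pi> \<Longrightarrow> converges_to G (\<lambda>k. (\<pi>s k)(I := \<sigma>)) (\<pi>(I := \<sigma>))"
  unfolding converges_to_def by auto

lemma dU_tendsto: "I \<in> infosets G \<Longrightarrow> converges_to G \<pi>s \<pi> \<Longrightarrow> (\<lambda>k. dU G (\<pi>s k) I a) \<longlonglongrightarrow> dU G \<pi> I a"
  unfolding dU_eq_dU_dir by (rule dU_dir_tendsto)

text \<open>Limits of maximisers over shrinking sets of perturbed strategies are both EDT- and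
  CDT-Nash equilibria; the perturbed maximisers themselves serve as the trembling sequence.\<close>
context
  fixes \<pi>s :: "nat \<Rightarrow> 'a strategy" and \<delta> :: "nat \<Rightarrow> real" and \<pi> :: "'a strategy"
  assumes perturbed: "\<And>k. \<pi>s k \<in> perturbed_strategies G (\<delta> k)"
    and maximal: "\<And>k \<sigma>. \<sigma> \<in> perturbed_strategies G (\<delta> k) \<Longrightarrow> U G \<sigma> \<le> U G (\<pi>s k)"
    and \<delta>_pos: "\<And>k. 0 < \<delta> k" and \<delta>_small: "\<And>k. num_actions G * \<delta> k \<le> 1"
    and \<delta>_lim: "\<delta> \<longlonglongrightarrow> 0" and conv: "converges_to G \<pi>s \<pi>"
begin

lemma maximizer_strategies: "\<pi>s k \<in> strategies G"
  using perturbed unfolding perturbed_strategies_def by blast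

lemma maximizer_fully_mixed: "fully_mixed G (\<pi>s k)"
  using perturbed[of k] \<delta>_pos[of k] unfolding perturbed_strategies_def fully_mixed_def by fastforce

lemma limit_strategies: "\<pi> \<in> strategies G"
  using perturbed_strategies_closed[OF _ conv order_refl] maximizer_strategies
  unfolding perturbed_strategies_zero by blast

lemma limit_EDT_rational: "EDT_rational G \<pi>"
  unfolding EDT_rational_def
proof (intro conjI exI[of _ \<pi>s] exI[of _ "\<lambda>k. (perturbation_const G + 1) * \<delta> k"] allI ballI impI
    limit_strategies maximizer_strategies maximizer_fully_mixed conv)
  show "0 < (perturbation_const G + 1) * \<delta> k" for k
    using perturbation_const_nonneg \<delta>_pos[of k] by simp
  show "(\<lambda>k. (perturbation_const G + 1) * \<delta> k) \<longlonglongrightarrow> 0"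
    using tendsto_mult_right_zero[OF \<delta>_lim] by simp
  fix k I \<sigma> assume I: "I \<in> infosets G" and p: "0 < probI G (\<pi>s k) I" and \<sigma>: "\<sigma> \<in> simplex (actsI G I)"
  have "U G ((\<pi>s k)(I := \<sigma>)) - U G (\<pi>s k) \<le> probI G (\<pi>s k) I * (\<delta> k * perturbation_const G)"
    using perturbed_maximizer_deviation_le[OF perturbed maximal less_imp_le[OF \<delta>_pos] \<delta>_small I \<sigma>] .
  then show "(U G ((\<pi>s k)(I := \<sigma>)) - U G (\<pi>s k)) / probI G (\<pi>s k) I \<le> (perturbation_const G + 1) * \<delta> k"
    using p mult_pos_pos[OF \<delta>_pos[of k] p] by (simp add: divide_le_eq algebra_simps)
qed

lemma limit_CDT_rational: "CDT_rational G \<pi>"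
  unfolding CDT_rational_def
proof (intro conjI exI[of _ \<pi>s] exI[of _ "\<lambda>k. (perturbation_const G + 1) * \<delta> k"] allI ballI impI
    limit_strategies maximizer_strategies maximizer_fully_mixed conv)
  show "0 < (perturbation_const G + 1) * \<delta> k" for k
    using perturbation_const_nonneg \<delta>_pos[of k] by simp
  show "(\<lambda>k. (perturbation_const G + 1) * \<delta> k) \<longlonglongrightarrow> 0"
    using tendsto_mult_right_zero[OF \<delta>_lim] by simp
  fix k I \<sigma> assume I: "I \<in> infosets G" and p: "0 < Fr G (\<pi>s k) I" and \<sigma>: "\<sigma> \<in> simplex (actsI G I)"
  have "U_CDT G \<sigma> (\<pi>s k) I - U G (\<pi>s k) \<le> Fr G (\<pi>s k) I * (\<delta> k * perturbation_const G)"
    using perturbed_maximizer_dU_dir_le[OF perturbed maximal less_imp_le[OF \<delta>_pos] \<delta>_small I \<sigma>]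
    by (simp add: U_CDT_eq[OF I])
  then show "(U_CDT G \<sigma> (\<pi>s k) I - U G (\<pi>s k)) / Fr G (\<pi>s k) I \<le> (perturbation_const G + 1) * \<delta> k"
    using p mult_pos_pos[OF \<delta>_pos[of k] p] by (simp add: divide_le_eq algebra_simps)
qed

lemma limit_EDT_eq: "EDT_eq G \<pi>"
  unfolding EDT_eq_def
proof (intro conjI ballI limit_strategies)
  fix I \<sigma> assume I: "I \<in> infosets G" and \<sigma>: "\<sigma> \<in> simplex (actsI G I)"
  have "U G ((\<pi>s k)(I := \<sigma>)) \<le> U G (\<pi>s k) + \<delta> k * (card I * perturbation_const G)" for k
    using perturbed_maximizer_deviation_le[OF perturbed[of k] maximal less_imp_le[OF \<delta>_pos[of k]] \<delta>_small[of k] I \<sigma>]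
      mult_right_mono[OF probI_le_card[OF I maximizer_strategies[of k]]
        mult_nonneg_nonneg[OF less_imp_le[OF \<delta>_pos[of k]] perturbation_const_nonneg]]
    by (simp add: ac_simps)
  moreover have "(\<lambda>k. U G (\<pi>s k) + \<delta> k * (card I * perturbation_const G)) \<longlonglongrightarrow> U G \<pi> + 0 * (card I * perturbation_const G)"
    by (intro tendsto_intros U_tendsto[OF conv] \<delta>_lim)
  ultimately show "U G (\<pi>(I := \<sigma>)) \<le> U G \<pi>"
    using LIMSEQ_le[OF U_tendsto[OF converges_to_upd[OF conv]]] by simp
qed

lemma limit_variational_inequality:
  assumes I: "I \<in> infosets G" and \<sigma>: "\<sigma> \<in> simplex (actsI G I)"
  shows "(\<Sum>a\<in>actsI G I. (\<sigma> a - \<pi> I a) * dU G \<pi> I a) \<le> 0"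
proof -
  have "(\<Sum>a\<in>actsI G I. (\<sigma> a - \<pi>s k I a) * dU G (\<pi>s k) I a) \<le> \<delta> k * (card I * perturbation_const G)" for k
    using perturbed_maximizer_dU_dir_le[OF perturbed[of k] maximal less_imp_le[OF \<delta>_pos[of k]] \<delta>_small[of k] I \<sigma>]
      mult_right_mono[OF Fr_le_card[OF I maximizer_strategies[of k]]
        mult_nonneg_nonneg[OF less_imp_le[OF \<delta>_pos[of k]] perturbation_const_nonneg]]
    by (simp add: dU_dir_eq_sum_dU[OF I] ac_simps)
  moreover have "(\<lambda>k. \<Sum>a\<in>actsI G I. (\<sigma> a - \<pi>s k I a) * dU G (\<pi>s k) I a) \<longlonglongrightarrow>
      (\<Sum>a\<in>actsI G I. (\<sigma> a - \<pi> I a) * dU G \<pi> I a)"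
    using conv I unfolding converges_to_def
    by (intro tendsto_intros dU_tendsto[OF I conv]) auto
  moreover have "(\<lambda>k. \<delta> k * (card I * perturbation_const G)) \<longlonglongrightarrow> 0"
    using tendsto_mult_left_zero[OF \<delta>_lim] by simp
  ultimately show ?thesis using LIMSEQ_le by blast
qed

lemma limit_CDT_eq: "CDT_eq G \<pi>"
  unfolding CDT_eq_def
proof (intro conjI limit_strategies exI[of _ "\<lambda>I. Max (dU G \<pi> I ` actsI G I)"] ballI
    exI[of _ "\<lambda>I a. Max (dU G \<pi> I ` actsI G I) - dU G \<pi> I a"])
  fix I a assume I: "I \<in> infosets G" and a: "a \<in> actsI G I"
  show "0 \<le> Max (dU G \<pi> I ` actsI G I) - dU G \<pi> I a" using a finite_actsI by simp
  show "dU G \<pi> I a + (Max (dU G \<pi> I ` actsI G I) - dU G \<pi> I a) = Max (dU G \<pi> I ` actsI G I)"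
    by simp
  have \<pi>I: "\<pi> I \<in> simplex (actsI G I)" using limit_strategies I unfolding strategies_def by blast
  show "(Max (dU G \<pi> I ` actsI G I) - dU G \<pi> I a) * \<pi> I a = 0"
    using simplex_variational_support_Max[OF finite_actsI \<pi>I limit_variational_inequality[OF I] a]
      simplex_nonneg[OF \<pi>I a] by (cases "\<pi> I a = 0") auto
qed

end

lemma exists_EDT_CDT_Nash: "\<exists>\<pi>. \<pi> \<in> EDT_Nash G \<and> \<pi> \<in> CDT_Nash G"
proof -
  define \<delta> where "\<delta> n = inverse (num_actions G + 1) * inverse (real (Suc n))" for n
  have \<delta>: "0 < \<delta> n" "num_actions G * \<delta> n \<le> 1" for n
  proof -
    have "num_actions G * inverse (num_actions G + 1) \<le> 1"
      using num_actions_nonneg by (simp add: divide_inverse[symmetric])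
    moreover have "inverse (real (Suc n)) \<le> 1" by (simp add: inverse_le_1_iff)
    moreover have "num_actions G * \<delta> n = num_actions G * inverse (num_actions G + 1) * inverse (real (Suc n))"
      unfolding \<delta>_def by (simp add: mult.assoc)
    ultimately show "num_actions G * \<delta> n \<le> 1"
      using num_actions_nonneg by (metis inverse_nonnegative_iff_nonnegative mult_le_one of_nat_0_le_iff)
    show "0 < \<delta> n" unfolding \<delta>_def using num_actions_nonneg by simp
  qed
  have "\<delta> \<longlonglongrightarrow> 0"
    unfolding \<delta>_def by (rule tendsto_mult_right_zero[OF LIMSEQ_inverse_real_of_nat])
  have "\<exists>p. p \<in> perturbed_strategies G (\<delta> n) \<and> (\<forall>\<sigma>\<in>perturbed_strategies G (\<delta> n). U G \<sigma> \<le> U G p)" for n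
  proof -
    obtain p where "p \<in> perturbed_strategies G (\<delta> n)"
      and "\<And>\<sigma>. \<sigma> \<in> perturbed_strategies G (\<delta> n) \<Longrightarrow> U G \<sigma> \<le> U G p"
      using perturbed_maximizer_exists[OF less_imp_le[OF \<delta>(1)[of n]] \<delta>(2)[of n]] by metis
    then show ?thesis by blast
  qed
  then obtain x where x: "\<And>n. x n \<in> perturbed_strategies G (\<delta> n)"
    and max: "\<And>n \<sigma>. \<sigma> \<in> perturbed_strategies G (\<delta> n) \<Longrightarrow> U G \<sigma> \<le> U G (x n)"
    by metis
  obtain r \<pi> where r: "strict_mono r" and c: "converges_to G (\<lambda>n. x (r n)) \<pi>"
    using converges_subseq[of x] x unfolding perturbed_strategies_def by blast
  have \<delta>r: "(\<lambda>n. \<delta> (r n)) \<longlonglongrightarrow> 0"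
    using LIMSEQ_subseq_LIMSEQ[OF \<open>\<delta> \<longlonglongrightarrow> 0\<close> r] by (simp add: comp_def)
  note limit = limit_EDT_rational limit_CDT_rational limit_EDT_eq limit_CDT_eq
  show ?thesis
    using limit[of "\<lambda>n. x (r n)" "\<lambda>n. \<delta> (r n)" \<pi>, OF x max \<delta> \<delta>r c]
    unfolding EDT_Nash_def CDT_Nash_def realization_equiv_def by blast
qed

end

section \<open>Perfect recall\<close>

lemma obs1_take:
  assumes "p \<le> length h"
  shows "obs1 G (take p h) =
    map (\<lambda>k. (infoset_of G (take k h), h ! k)) (filter (\<lambda>k. take k h \<in> P1 G) [0..<p])"
proof -
  have "filter (\<lambda>k. take k (take p h) \<in> P1 G) [0..<p] = filter (\<lambda>k. take k h \<in> P1 G) [0..<p]"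
    by (rule filter_cong) (auto simp: min_def)
  moreover have "map (\<lambda>k. (infoset_of G (take k (take p h)), take p h ! k)) (filter (\<lambda>k. take k h \<in> P1 G) [0..<p])
      = map (\<lambda>k. (infoset_of G (take k h), h ! k)) (filter (\<lambda>k. take k h \<in> P1 G) [0..<p])"
    by (rule map_cong) (auto simp: min_def)
  ultimately show ?thesis unfolding obs1_def using assms by (simp add: min_def)
qed

lemma length_obs1_take_less:
  assumes "j < k" "k \<le> length z" "take j z \<in> P1 G"
  shows "length (obs1 G (take j z)) < length (obs1 G (take k z))"
  using obs1_take[of j z G] obs1_take[of k z G] assms
    length_filter_upt_less[of j k "\<lambda>k. take k z \<in> P1 G"]
  by simp

definition obs_prob :: "'a strategy \<Rightarrow> ('a list set \<times> 'a) list \<Rightarrow> real" where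
  "obs_prob \<pi> os = prod_list (map (\<lambda>(J, a). \<pi> J a) os)"

definition chance_prob :: "'a efg \<Rightarrow> 'a list \<Rightarrow> real" where
  "chance_prob G h = (\<Prod>k | k < length h \<and> take k h \<notin> P1 G. chance G (take k h) (h ! k))"

lemma obs_prob_obs1:
  "obs_prob \<pi> (obs1 G h) = (\<Prod>k | k < length h \<and> take k h \<in> P1 G. move_prob G \<pi> h k)"
proof -
  let ?P = "\<lambda>k. take k h \<in> P1 G"
  have eq: "map (\<lambda>k. \<pi> (infoset_of G (take k h)) (h ! k)) (filter ?P [0..<length h]) =
      map (move_prob G \<pi> h) (filter ?P [0..<length h])"
    by (rule map_cong) (auto simp: move_prob_def)
  have "obs_prob \<pi> (obs1 G h) = (\<Prod>k\<leftarrow>filter ?P [0..<length h]. \<pi> (infoset_of G (take k h)) (h ! k))"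
    unfolding obs_prob_def obs1_def by (simp add: comp_def)
  also have "\<dots> = (\<Prod>k\<leftarrow>filter ?P [0..<length h]. move_prob G \<pi> h k)"
    by (simp only: eq)
  also have "\<dots> = (\<Prod>k\<in>set (filter ?P [0..<length h]). move_prob G \<pi> h k)"
    by (rule prod.distinct_set_conv_list[symmetric]) simp
  also have "set (filter ?P [0..<length h]) = {k. k < length h \<and> ?P k}" by auto
  finally show ?thesis .
qed

lemma reach_eq_obs_prob_chance_prob: "reach G \<pi> h = obs_prob \<pi> (obs1 G h) * chance_prob G h"
proof -
  have "reach G \<pi> h = (\<Prod>k\<in>{..<length h} \<inter> {k. take k h \<in> P1 G}. move_prob G \<pi> h k) *
      (\<Prod>k\<in>{..<length h} - {k. take k h \<in> P1 G}. move_prob G \<pi> h k)"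
    unfolding reach_eq_prod_move_prob by (rule prod.Int_Diff) simp
  moreover have "{..<length h} \<inter> {k. take k h \<in> P1 G} = {k. k < length h \<and> take k h \<in> P1 G}"
    and "{..<length h} - {k. take k h \<in> P1 G} = {k. k < length h \<and> take k h \<notin> P1 G}" by auto
  ultimately show ?thesis
    unfolding obs_prob_obs1 chance_prob_def by (simp add: move_prob_def)
qed

context game
begin

lemma obs_prob_bounds:
  "\<pi> \<in> strategies G \<Longrightarrow> h \<in> H G \<Longrightarrow> 0 \<le> obs_prob \<pi> (obs1 G h) \<and> obs_prob \<pi> (obs1 G h) \<le> 1"
  unfolding obs_prob_obs1 using move_prob_bounds by (auto intro!: prod_nonneg prod_le_1)

lemma obs_prob_pos:
  assumes \<pi>: "fully_mixed G \<pi>" and h: "h \<in> H G"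
  shows "0 < obs_prob \<pi> (obs1 G h)"
  unfolding obs_prob_obs1
proof (rule prod_pos)
  fix k assume "k \<in> {k. k < length h \<and> take k h \<in> P1 G}"
  then have k: "k < length h" "take k h \<in> P1 G" by auto
  show "0 < move_prob G \<pi> h k"
    using \<pi> infoset_of_mem[OF k(2)] action_in_actsI[OF infoset_of_mem[OF k(2)] h k(1)] k(2)
    unfolding fully_mixed_def move_prob_def by simp
qed

lemma chance_prob_bounds:
  assumes h: "h \<in> H G"
  shows "0 \<le> chance_prob G h \<and> chance_prob G h \<le> 1"
proof -
  have "0 \<le> chance G (take k h) (h ! k) \<and> chance G (take k h) (h ! k) \<le> 1"
    if k: "k < length h" "take k h \<notin> P1 G" for k
  proof -
    have "take k h \<in> chance_nodes G"
      using prefix_not_leaf[OF h k(1)] k(2) unfolding chance_nodes_def by auto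
    then have "chance G (take k h) \<in> simplex (acts G (take k h))" by (rule chance_simplex)
    then show ?thesis
      using simplex_le_1[OF _ finite_acts action_in_acts[OF h k(1)]] simplex_nonneg[OF _ action_in_acts[OF h k(1)]]
      by blast
  qed
  then show ?thesis unfolding chance_prob_def by (auto intro!: prod_nonneg prod_le_1)
qed

end

definition infoset_depth :: "'a efg \<Rightarrow> 'a list set \<Rightarrow> nat" where
  "infoset_depth G I = length (obs1 G (SOME h. h \<in> I))"

text \<open>The part of the deviation gain at \<open>I\<close> that remains after factoring out the
  probability of Player 1's own moves leading to \<open>I\<close>.\<close>
definition continuation_gain :: "'a efg \<Rightarrow> 'a strategy \<Rightarrow> 'a list set \<Rightarrow> ('a \<Rightarrow> real) \<Rightarrow> real" where
  "continuation_gain G \<pi> I d = (\<Sum>z\<in>leaves G. (\<Sum>j\<in>visits I z.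
      d (z ! j) * (chance_prob G (take j z) * tail_prob G \<pi> z j)) * util G z)"

locale perfect_recall_game = game +
  assumes obs1_eq: "I \<in> infosets G \<Longrightarrow> h \<in> I \<Longrightarrow> h' \<in> I \<Longrightarrow> obs1 G h = obs1 G h'"
begin

lemma infoset_depth_eq: "I \<in> infosets G \<Longrightarrow> h \<in> I \<Longrightarrow> infoset_depth G I = length (obs1 G h)"
  unfolding infoset_depth_def using obs1_eq by (metis someI)

lemma prefix_in_infoset_unique:
  assumes I: "I \<in> infosets G" and "take j z \<in> I" "take k z \<in> I" "j \<le> length z" "k \<le> length z"
  shows "j = k"
proof (rule ccontr)
  have less: False if "take j z \<in> I" "take k z \<in> I" "j < k" "k \<le> length z" for j k
    using length_obs1_take_less[of j k z G] that infoset_subset_P1[OF I] obs1_eq[OF I that(1,2)] by auto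
  assume "j \<noteq> k"
  then show False using less[of j k] less[of k j] assms by linarith
qed

lemma visits_unique: "I \<in> infosets G \<Longrightarrow> j \<in> visits I z \<Longrightarrow> k \<in> visits I z \<Longrightarrow> j = k"
  unfolding visits_def using prefix_in_infoset_unique by auto

lemma first_nodes_eq:
  assumes I: "I \<in> infosets G"
  shows "first_nodes I = I"
proof -
  have False if "h \<in> I" "k < length h" "take k h \<in> I" for h k
    using prefix_in_infoset_unique[OF I, of k h "length h"] that by simp
  then show ?thesis unfolding first_nodes_def by blast
qed

lemma Fr_eq_probI: "I \<in> infosets G \<Longrightarrow> Fr G \<pi> I = probI G \<pi> I"
  unfolding Fr_def probI_def by (simp add: first_nodes_eq)

lemma prod_move_prob_upd_visit:
  assumes I: "I \<in> infosets G" and j: "j \<in> visits I z"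
  shows "(\<Prod>k<length z. move_prob G (\<pi>(I := x)) z k) =
      x (z ! j) * (\<Prod>k\<in>{..<length z}-{j}. move_prob G \<pi> z k)"
proof -
  have "(\<Prod>k<length z. move_prob G (\<pi>(I := x)) z k) =
      move_prob G (\<pi>(I := x)) z j * (\<Prod>k\<in>{..<length z}-{j}. move_prob G (\<pi>(I := x)) z k)"
    using j unfolding visits_def by (intro prod.remove) auto
  moreover have "move_prob G (\<pi>(I := x)) z k = move_prob G \<pi> z k" if "k \<in> {..<length z}-{j}" for k
    using that visits_unique[OF I j, of k] unfolding move_prob_upd[OF I] visits_def by auto
  ultimately show ?thesis using j by (simp add: move_prob_upd[OF I] visits_def)
qed

text \<open>With perfect recall a path visits an infoset at most once, so \<open>U\<close> is affine in
  the behaviour at a single infoset.\<close>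
lemma U_upd_diff:
  assumes I: "I \<in> infosets G"
  shows "U G (\<pi>(I := x)) - U G (\<pi>(I := y)) = dU_dir G \<pi> I (\<lambda>a. x a - y a)"
proof -
  have "(\<Prod>k<length z. move_prob G (\<pi>(I := x)) z k) - (\<Prod>k<length z. move_prob G (\<pi>(I := y)) z k) =
      (\<Sum>j\<in>visits I z. (x (z ! j) - y (z ! j)) * (\<Prod>k\<in>{..<length z}-{j}. move_prob G \<pi> z k))" for z
  proof (cases "visits I z = {}")
    case True
    then have "move_prob G (\<pi>(I := w)) z k = move_prob G \<pi> z k" if "k < length z" for w k
      using that unfolding move_prob_upd[OF I] visits_def by auto
    then show ?thesis using True by simp
  next
    case False
    then obtain j where j: "j \<in> visits I z" by blast
    then have "visits I z = {j}" using visits_unique[OF I] by blast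
    then show ?thesis using prod_move_prob_upd_visit[OF I j] by (simp add: left_diff_distrib)
  qed
  then show ?thesis
    unfolding U_eq_prod_move_prob dU_dir_def sum_subtractf[symmetric] left_diff_distrib[symmetric]
    by simp
qed

lemma U_CDT_eq_U_upd: "I \<in> infosets G \<Longrightarrow> U_CDT G \<sigma> \<pi> I = U G (\<pi>(I := \<sigma>))"
  using U_CDT_eq U_upd_diff[of I \<pi> \<sigma> "\<pi> I"] by simp

lemma CDT_rational_imp_EDT_rational: "CDT_rational G \<pi> \<Longrightarrow> EDT_rational G \<pi>"
  unfolding CDT_rational_def EDT_rational_def by (simp add: Fr_eq_probI U_CDT_eq_U_upd cong: ball_cong)

lemma dU_dir_factor:
  assumes I: "I \<in> infosets G" and h0: "h0 \<in> I"
  shows "dU_dir G \<pi> I d = obs_prob \<pi> (obs1 G h0) * continuation_gain G \<pi> I d"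
proof -
  have "(\<Prod>k\<in>{..<length z}-{j}. move_prob G \<pi> z k) =
      obs_prob \<pi> (obs1 G h0) * (chance_prob G (take j z) * tail_prob G \<pi> z j)" if "j \<in> visits I z" for z j
    using that prod_move_prob_remove[of j z] reach_eq_obs_prob_chance_prob[of G \<pi> "take j z"]
      obs1_eq[OF I _ h0] unfolding visits_def by simp
  then show ?thesis
    unfolding dU_dir_def continuation_gain_def by (simp add: sum_distrib_left sum_distrib_right mult_ac)
qed

lemma continuation_gain_cong:
  assumes I: "I \<in> infosets G"
    and same: "\<And>J. J \<in> infosets G \<Longrightarrow> infoset_depth G I < infoset_depth G J \<Longrightarrow> \<pi> J = \<pi>' J"
  shows "continuation_gain G \<pi> I d = continuation_gain G \<pi>' I d"
proof -
  have "move_prob G \<pi> z k = move_prob G \<pi>' z k" if j: "j \<in> visits I z" and k: "k \<in> {Suc j..<length z}" for z j k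
  proof (cases "take k z \<in> P1 G")
    case True
    have "length (obs1 G (take j z)) < length (obs1 G (take k z))"
      using length_obs1_take_less[of j k z G] j k infoset_subset_P1[OF I] unfolding visits_def by auto
    then have "infoset_depth G I < infoset_depth G (infoset_of G (take k z))"
      using j infoset_depth_eq[OF I, of "take j z"] infoset_depth_eq[OF infoset_of_mem[OF True]]
      unfolding visits_def by simp
    then show ?thesis using same infoset_of_mem(1)[OF True] True unfolding move_prob_def by simp
  qed (simp add: move_prob_def)
  then have "tail_prob G \<pi> z j = tail_prob G \<pi>' z j" if "j \<in> visits I z" for z j
    unfolding tail_prob_def using that by (intro prod.cong) auto
  then show ?thesis unfolding continuation_gain_def by simp
qed

lemma probI_factor:
  assumes I: "I \<in> infosets G" and h0: "h0 \<in> I"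
  shows "probI G \<pi> I = obs_prob \<pi> (obs1 G h0) * (\<Sum>h\<in>I. chance_prob G h)"
proof -
  have "reach G \<pi> h = obs_prob \<pi> (obs1 G h0) * chance_prob G h" if "h \<in> I" for h
    using reach_eq_obs_prob_chance_prob[of G \<pi> h] obs1_eq[OF I that h0] by simp
  then show ?thesis unfolding probI_def first_nodes_eq[OF I] sum_distrib_left by simp
qed

lemma continuation_gain_le_card:
  assumes I: "I \<in> infosets G" and p: "p \<in> strategies G" "fully_mixed G p" and \<epsilon>: "0 \<le> \<epsilon>"
    and rational: "0 < probI G p I \<Longrightarrow> (U G (p(I := x)) - U G p) / probI G p I \<le> \<epsilon>"
  shows "continuation_gain G p I (\<lambda>a. x a - p I a) \<le> \<epsilon> * card I"
proof -
  obtain h0 where h0: "h0 \<in> I" using infoset_nonempty[OF I] by blast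
  let ?C = "continuation_gain G p I (\<lambda>a. x a - p I a)" and ?S = "\<Sum>h\<in>I. chance_prob G h"
  have S: "0 \<le> ?S" "?S \<le> card I"
    using chance_prob_bounds infoset_subset_H[OF I] sum_bounded_above[of I "chance_prob G" 1]
    by (auto intro: sum_nonneg)
  have "?C \<le> \<epsilon> * ?S"
  proof (cases "?S = 0")
    case True
    then have "chance_prob G h = 0" if "h \<in> I" for h
      using that sum_nonneg_eq_0_iff[OF finite_infoset[OF I]] chance_prob_bounds infoset_subset_H[OF I] by blast
    then have "?C = 0" unfolding continuation_gain_def visits_def by simp
    then show ?thesis using True by simp
  next
    case False
    have pos: "0 < obs_prob p (obs1 G h0)"
      using obs_prob_pos[OF p(2)] h0 infoset_subset_H[OF I] by blast
    have "probI G p I = obs_prob p (obs1 G h0) * ?S" by (rule probI_factor[OF I h0])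
    moreover have "U G (p(I := x)) - U G p = obs_prob p (obs1 G h0) * ?C"
      using U_upd_diff[OF I, of p x "p I"] dU_dir_factor[OF I h0] by simp
    ultimately show ?thesis using rational pos S False by (simp add: field_simps)
  qed
  also have "\<dots> \<le> \<epsilon> * card I" using S \<epsilon> by (simp add: mult_left_mono)
  finally show ?thesis .
qed

text \<open>The gain factors through the continuation gain of \<open>p\<close>, which the shallower switched
  infosets do not affect.\<close>
lemma switch_deepest_infoset_le:
  assumes I: "I \<in> infosets G" and p: "p \<in> strategies G" "fully_mixed G p" and \<sigma>: "\<sigma> \<in> strategies G"
    and D: "D \<subseteq> infosets G" "I \<notin> D" and shallower: "\<And>J. J \<in> D \<Longrightarrow> infoset_depth G J \<le> infoset_depth G I"
    and \<epsilon>: "0 \<le> \<epsilon>" and rational: "0 < probI G p I \<Longrightarrow> (U G (p(I := \<sigma> I)) - U G p) / probI G p I \<le> \<epsilon>"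
  shows "U G (\<lambda>J. if J \<in> insert I D then \<sigma> J else p J) - U G (\<lambda>J. if J \<in> D then \<sigma> J else p J)
         \<le> \<epsilon> * card I"
proof -
  define \<tau> where "\<tau> = (\<lambda>J. if J \<in> D then \<sigma> J else p J)"
  obtain h0 where h0: "h0 \<in> I" using infoset_nonempty[OF I] by blast
  let ?C = "continuation_gain G p I (\<lambda>a. \<sigma> I a - p I a)"
  have \<tau>I: "\<tau>(I := p I) = \<tau>" using D(2) unfolding \<tau>_def by auto
  have "continuation_gain G \<tau> I (\<lambda>a. \<sigma> I a - p I a) = ?C"
    using shallower by (intro continuation_gain_cong[OF I]) (auto simp: \<tau>_def not_le[symmetric])
  then have "U G (\<tau>(I := \<sigma> I)) - U G \<tau> = obs_prob \<tau> (obs1 G h0) * ?C"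
    using U_upd_diff[OF I, of \<tau> "\<sigma> I" "p I"] dU_dir_factor[OF I h0, of \<tau>] \<tau>I by simp
  also have "\<dots> \<le> \<epsilon> * card I"
  proof -
    have "\<tau> \<in> strategies G" using p \<sigma> unfolding \<tau>_def strategies_def by auto
    then have obs: "0 \<le> obs_prob \<tau> (obs1 G h0)" "obs_prob \<tau> (obs1 G h0) \<le> 1"
      using obs_prob_bounds h0 infoset_subset_H[OF I] by blast+
    have C: "?C \<le> \<epsilon> * card I"
      using continuation_gain_le_card[OF I p \<epsilon> rational] .
    show ?thesis
    proof (cases "?C \<le> 0")
      case True
      moreover have "0 \<le> \<epsilon> * card I" using \<epsilon> by simp
      ultimately show ?thesis using mult_nonneg_nonpos[OF obs(1) True] by linarith
    next
      case False
      then have "obs_prob \<tau> (obs1 G h0) * ?C \<le> ?C" using obs by (intro mult_left_le_one_le) auto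
      then show ?thesis using C by linarith
    qed
  qed
  moreover have "(\<lambda>J. if J \<in> insert I D then \<sigma> J else p J) = \<tau>(I := \<sigma> I)" unfolding \<tau>_def by auto
  ultimately show ?thesis by (simp only: \<tau>_def)
qed

text \<open>Replacing \<open>p\<close> by \<open>\<sigma>\<close> one infoset at a time, from the shallowest to the deepest.\<close>
lemma U_le_by_switching:
  assumes p: "p \<in> strategies G" "fully_mixed G p" and \<sigma>: "\<sigma> \<in> strategies G" and \<epsilon>: "0 \<le> \<epsilon>"
    and rational: "\<And>I. I \<in> infosets G \<Longrightarrow> 0 < probI G p I \<Longrightarrow>
                     (U G (p(I := \<sigma> I)) - U G p) / probI G p I \<le> \<epsilon>"
  shows "U G \<sigma> \<le> U G p + \<epsilon> * (\<Sum>J\<in>infosets G. real (card J))"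
proof -
  have "U G (\<lambda>J. if J \<in> D then \<sigma> J else p J) - U G p \<le> \<epsilon> * (\<Sum>J\<in>D. real (card J))"
    if "D \<subseteq> infosets G" for D
  proof -
    have "finite D" using that finite_infosets finite_subset by blast
    then show ?thesis using that
    proof (induction D rule: finite_ranking_induct[where f = "infoset_depth G"])
      case empty
      then show ?case by simp
    next
      case (insert I D)
      show ?case
      proof (cases "I \<in> D")
        case True
        then show ?thesis using insert by (simp add: insert_absorb)
      next
        case False
        then show ?thesis
          using switch_deepest_infoset_le[OF _ p \<sigma> _ False insert(2) \<epsilon> rational] insert
          by (simp add: distrib_left)
      qed
    qed
  qed
  moreover have "U G \<sigma> = U G (\<lambda>J. if J \<in> infosets G then \<sigma> J else p J)" by (rule U_cong) simp
  ultimately show ?thesis by fastforce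
qed

lemma EDT_rational_optimal:
  assumes "EDT_rational G \<pi>" and \<sigma>: "\<sigma> \<in> strategies G"
  shows "U G \<sigma> \<le> U G \<pi>"
proof -
  obtain \<pi>s \<epsilon> where \<pi>s: "\<And>k. \<pi>s k \<in> strategies G" "\<And>k. fully_mixed G (\<pi>s k)"
    and c: "converges_to G \<pi>s \<pi>" and \<epsilon>: "\<And>k. 0 < \<epsilon> k" "\<epsilon> \<longlonglongrightarrow> 0"
    and rational: "\<And>k I \<sigma>'. I \<in> infosets G \<Longrightarrow> 0 < probI G (\<pi>s k) I \<Longrightarrow> \<sigma>' \<in> simplex (actsI G I) \<Longrightarrow>
       (U G ((\<pi>s k)(I := \<sigma>')) - U G (\<pi>s k)) / probI G (\<pi>s k) I \<le> \<epsilon> k"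
    using assms(1) unfolding EDT_rational_def by blast
  have "U G \<sigma> \<le> U G (\<pi>s k) + \<epsilon> k * (\<Sum>J\<in>infosets G. real (card J))" for k
    using \<sigma> by (intro U_le_by_switching \<pi>s less_imp_le[OF \<epsilon>(1)] rational) (auto simp: strategies_def)
  moreover have "(\<lambda>k. U G (\<pi>s k) + \<epsilon> k * (\<Sum>J\<in>infosets G. real (card J))) \<longlonglongrightarrow>
      U G \<pi> + 0 * (\<Sum>J\<in>infosets G. real (card J))"
    by (intro tendsto_intros U_tendsto[OF c] \<epsilon>(2))
  ultimately show ?thesis using LIMSEQ_le_const by fastforce
qed

lemma EDT_Nash_optimal: "\<pi> \<in> EDT_Nash G \<Longrightarrow> \<sigma> \<in> strategies G \<Longrightarrow> U G \<sigma> \<le> U G \<pi>"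
  unfolding EDT_Nash_def using EDT_rational_optimal U_realization_equiv by fastforce

lemma CDT_Nash_optimal: "\<pi> \<in> CDT_Nash G \<Longrightarrow> \<sigma> \<in> strategies G \<Longrightarrow> U G \<sigma> \<le> U G \<pi>"
  unfolding CDT_Nash_def
  using EDT_rational_optimal CDT_rational_imp_EDT_rational U_realization_equiv by fastforce

end

section \<open>The perfect-recall refinement\<close>

lemma pr1_simps [simp]:
  "H (pr1 G) = H G" "P1 (pr1 G) = P1 G" "chance (pr1 G) = chance G" "util (pr1 G) = util G"
  unfolding pr1_def by simp_all

lemma infosets_pr1: "infosets (pr1 G) = (\<Union>I\<in>infosets G. (\<lambda>h0. {h \<in> I. obs1 G h = obs1 G h0}) ` I)"
  unfolding pr1_def by simp

lemma acts_pr1 [simp]: "acts (pr1 G) = acts G"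
  unfolding acts_def[abs_def] by simp

lemma leaves_pr1 [simp]: "leaves (pr1 G) = leaves G"
  unfolding leaves_def by simp

lemma chance_nodes_pr1 [simp]: "chance_nodes (pr1 G) = chance_nodes G"
  unfolding chance_nodes_def by simp

definition lift_strategy :: "'a efg \<Rightarrow> 'a strategy \<Rightarrow> 'a strategy" where
  "lift_strategy G \<sigma> J = \<sigma> (infoset_of G (SOME h. h \<in> J))"

context game
begin

lemma pr1_infosetsE:
  assumes "J \<in> infosets (pr1 G)"
  obtains I h0 where "I \<in> infosets G" "h0 \<in> I" "J = {h \<in> I. obs1 G h = obs1 G h0}"
  using assms unfolding infosets_pr1 by blast

lemma obs1_class_in_infosets_pr1:
  "I \<in> infosets G \<Longrightarrow> g \<in> I \<Longrightarrow> {h \<in> I. obs1 G h = obs1 G g} \<in> infosets (pr1 G)"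
  unfolding infosets_pr1 by blast

lemma game_pr1: "game (pr1 G)"
proof
  have "\<forall>J\<in>infosets (pr1 G). J \<noteq> {}"
    by (auto elim!: pr1_infosetsE)
  moreover have "\<forall>J\<in>infosets (pr1 G). \<forall>h\<in>J. \<forall>h'\<in>J. acts (pr1 G) h = acts (pr1 G) h'"
    unfolding acts_pr1 using infoset_acts_eq by (blast elim!: pr1_infosetsE)
  moreover have "\<forall>J1\<in>infosets (pr1 G). \<forall>J2\<in>infosets (pr1 G). J1 \<noteq> J2 \<longrightarrow> J1 \<inter> J2 = {}"
  proof (intro ballI impI)
    fix J1 J2 assume J: "J1 \<in> infosets (pr1 G)" "J2 \<in> infosets (pr1 G)" "J1 \<noteq> J2"
    obtain I1 h1 where 1: "I1 \<in> infosets G" "J1 = {h \<in> I1. obs1 G h = obs1 G h1}"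
      using J(1) by (rule pr1_infosetsE)
    obtain I2 h2 where 2: "I2 \<in> infosets G" "J2 = {h \<in> I2. obs1 G h = obs1 G h2}"
      using J(2) by (rule pr1_infosetsE)
    show "J1 \<inter> J2 = {}"
    proof (rule ccontr)
      assume "J1 \<inter> J2 \<noteq> {}"
      then obtain g where g: "g \<in> I1" "g \<in> I2" "obs1 G g = obs1 G h1" "obs1 G g = obs1 G h2"
        using 1 2 by blast
      then have "I1 = I2" using infosets_disjoint[OF 1(1) 2(1)] by blast
      then show False using 1(2) 2(2) g(3,4) J(3) by simp
    qed
  qed
  moreover have "\<Union>(infosets (pr1 G)) = P1 (pr1 G)"
  proof
    show "\<Union>(infosets (pr1 G)) \<subseteq> P1 (pr1 G)"
      using infoset_subset_P1 by (auto elim!: pr1_infosetsE)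
    show "P1 (pr1 G) \<subseteq> \<Union>(infosets (pr1 G))"
    proof
      fix g assume "g \<in> P1 (pr1 G)"
      then obtain I where I: "I \<in> infosets G" "g \<in> I" using Union_infosets by auto
      then show "g \<in> \<Union>(infosets (pr1 G))" using obs1_class_in_infosets_pr1[OF I] by blast
    qed
  qed
  ultimately show "wf_game (pr1 G)"
    using wf unfolding wf_game_def pr1_simps acts_pr1 leaves_pr1 chance_nodes_pr1
    by (elim conjE) (intro conjI)
qed

lemma infoset_of_pr1:
  assumes g: "g \<in> P1 G"
  shows "infoset_of (pr1 G) g = {h \<in> infoset_of G g. obs1 G h = obs1 G g}"
proof -
  interpret pr1: game "pr1 G" by (rule game_pr1)
  have "{h \<in> infoset_of G g. obs1 G h = obs1 G g} \<in> infosets (pr1 G)"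
    using obs1_class_in_infosets_pr1 infoset_of_mem[OF g] by blast
  then show ?thesis using infoset_of_mem(2)[OF g] by (intro pr1.infoset_of_eq) auto
qed

lemma obs1_pr1:
  "obs1 (pr1 G) h = map (\<lambda>i. ({g \<in> fst (obs1 G h ! i). obs1 G g = take i (obs1 G h)}, snd (obs1 G h ! i)))
      [0..<length (obs1 G h)]"
proof -
  let ?P = "\<lambda>k. take k h \<in> P1 G"
  let ?L = "filter ?P [0..<length h]"
  let ?f = "\<lambda>k. (infoset_of G (take k h), h ! k)"
  have o: "obs1 G h = map ?f ?L" unfolding obs1_def ..
  have o': "obs1 (pr1 G) h = map (\<lambda>k. (infoset_of (pr1 G) (take k h), h ! k)) ?L"
    unfolding obs1_def by simp
  show ?thesis
  proof (rule nth_equalityI)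
    fix i assume "i < length (obs1 (pr1 G) h)"
    then have i: "i < length ?L" unfolding o' by simp
    let ?k = "?L ! i"
    have "?k \<in> set ?L" using i by (rule nth_mem)
    then have k: "?k < length h" "?P ?k" by auto
    have "obs1 G (take ?k h) = map ?f (filter ?P [0..<?k])"
      using obs1_take[of ?k h G] k by simp
    also have "\<dots> = take i (obs1 G h)" unfolding o filter_upt_nth_prefix[OF i] by (simp add: take_map)
    finally show "obs1 (pr1 G) h ! i =
        map (\<lambda>i. ({g \<in> fst (obs1 G h ! i). obs1 G g = take i (obs1 G h)}, snd (obs1 G h ! i)))
          [0..<length (obs1 G h)] ! i"
      using i infoset_of_pr1[OF k(2)] unfolding o o' by simp
  qed (simp add: o o')
qed

lemma perfect_recall_pr1: "perfect_recall_game (pr1 G)"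
proof (rule perfect_recall_game.intro[OF game_pr1], unfold_locales)
  fix J h h' assume J: "J \<in> infosets (pr1 G)" and "h \<in> J" "h' \<in> J"
  obtain I h0 where "J = {h \<in> I. obs1 G h = obs1 G h0}" using J by (rule pr1_infosetsE)
  then have "obs1 G h = obs1 G h'" using \<open>h \<in> J\<close> \<open>h' \<in> J\<close> by simp
  then show "obs1 (pr1 G) h = obs1 (pr1 G) h'" unfolding obs1_pr1 by simp
qed

lemma lift_strategy_infoset_of:
  assumes g: "g \<in> P1 G"
  shows "lift_strategy G \<sigma> (infoset_of (pr1 G) g) = \<sigma> (infoset_of G g)"
proof -
  let ?J = "infoset_of (pr1 G) g"
  have "g \<in> ?J" using infoset_of_pr1[OF g] infoset_of_mem[OF g] by simp
  then have "(SOME h. h \<in> ?J) \<in> ?J" by (rule someI)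
  then have "(SOME h. h \<in> ?J) \<in> infoset_of G g" using infoset_of_pr1[OF g] by simp
  then have "infoset_of G (SOME h. h \<in> ?J) = infoset_of G g"
    using infoset_of_eq infoset_of_mem[OF g] by blast
  then show ?thesis unfolding lift_strategy_def by simp
qed

lemma U_lift_strategy: "U (pr1 G) (lift_strategy G \<sigma>) = U G \<sigma>"
proof -
  have "move_prob (pr1 G) (lift_strategy G \<sigma>) z k = move_prob G \<sigma> z k" for z k
    unfolding move_prob_def using lift_strategy_infoset_of by simp
  then show ?thesis unfolding U_eq_prod_move_prob by simp
qed

lemma lift_strategy_strategies:
  assumes \<sigma>: "\<sigma> \<in> strategies G"
  shows "lift_strategy G \<sigma> \<in> strategies (pr1 G)"
  unfolding strategies_def
proof (intro CollectI ballI)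
  fix J assume "J \<in> infosets (pr1 G)"
  then obtain I h0 where I: "I \<in> infosets G" "h0 \<in> I" and J: "J = {h \<in> I. obs1 G h = obs1 G h0}"
    by (rule pr1_infosetsE)
  have "h0 \<in> J" using I J by simp
  then have "(SOME h. h \<in> J) \<in> J" by (rule someI)
  then have some: "(SOME h. h \<in> J) \<in> I" using J by blast
  have "actsI (pr1 G) J = acts G (SOME h. h \<in> J)" by (simp add: actsI_def)
  then have "infoset_of G (SOME h. h \<in> J) = I" and "actsI (pr1 G) J = actsI G I"
    using infoset_of_eq[OF I(1) some] actsI_eq[OF I(1) some] by simp_all
  then show "lift_strategy G \<sigma> J \<in> simplex (actsI (pr1 G) J)"
    unfolding lift_strategy_def using \<sigma> I(1) unfolding strategies_def by simp
qed

lemma optimal_values_le_pr1: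
  assumes S: "S \<subseteq> strategies G" "S \<noteq> {}" and T: "T \<subseteq> strategies (pr1 G)" "T \<noteq> {}"
    and optimal: "\<And>\<pi> \<sigma>. \<pi> \<in> T \<Longrightarrow> \<sigma> \<in> strategies (pr1 G) \<Longrightarrow> U (pr1 G) \<sigma> \<le> U (pr1 G) \<pi>"
  shows "Inf (U G ` S) \<le> Inf (U (pr1 G) ` T) \<and> Sup (U G ` S) \<le> Sup (U (pr1 G) ` T)"
proof (rule cInf_cSup_image_le[OF S(2) T(2)])
  show "U G \<sigma> \<le> U (pr1 G) \<pi>" if "\<sigma> \<in> S" "\<pi> \<in> T" for \<sigma> \<pi>
    using optimal[OF that(2) lift_strategy_strategies] U_lift_strategy S(1) that(1) by auto
  show "bdd_below (U G ` S)" using U_nonneg S(1) by (intro bdd_belowI[where m = 0]) auto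
  show "bdd_above (U (pr1 G) ` T)"
    using game.U_le_sum_util[OF game_pr1] T(1) by (intro bdd_aboveI[where M = "sum (util G) (leaves G)"]) auto
qed

end

theorem corollary2:
  fixes G :: "'a efg"
  assumes "wf_game G"
  shows "worst_val (pr1 G) (CDT_Nash (pr1 G)) \<ge> worst_val G (CDT_Nash G) \<and>
         best_val (pr1 G) (CDT_Nash (pr1 G)) \<ge> best_val G (CDT_Nash G) \<and>
         worst_val (pr1 G) (EDT_Nash (pr1 G)) \<ge> worst_val G (EDT_Nash G) \<and>
         best_val (pr1 G) (EDT_Nash (pr1 G)) \<ge> best_val G (EDT_Nash G)"
proof -
  interpret game G using assms by (rule game.intro)
  interpret pr1: perfect_recall_game "pr1 G" by (rule perfect_recall_pr1)
  have Nash_strategies: "EDT_Nash G' \<subseteq> strategies G'" "CDT_Nash G' \<subseteq> strategies G'" for G' :: "'a efg"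
    unfolding EDT_Nash_def EDT_eq_def CDT_Nash_def CDT_eq_def by auto
  have "EDT_Nash G \<noteq> {}" "CDT_Nash G \<noteq> {}" "EDT_Nash (pr1 G) \<noteq> {}" "CDT_Nash (pr1 G) \<noteq> {}"
    using exists_EDT_CDT_Nash pr1.exists_EDT_CDT_Nash by auto
  with Nash_strategies show ?thesis
    unfolding worst_val_def best_val_def
    using optimal_values_le_pr1[of "CDT_Nash G" "CDT_Nash (pr1 G)"] pr1.CDT_Nash_optimal
      optimal_values_le_pr1[of "EDT_Nash G" "EDT_Nash (pr1 G)"] pr1.EDT_Nash_optimal
    by auto
qed

end
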